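(* Let $G$ be an $r$-regular graph with $n$ vertices, $m$ edges and $r\ge 2$, and let $\mathcal Q(G)$ be its Q-graph. Let $a,b$ be distinct vertices of $\mathcal Q(G)$ with either $a,b\in V(G)$ or $a,b\in I(G)$. Then for each Laplacian eigenvalue $\theta\neq 2r$ of $G$, $\theta^{+}\in \mathrm{supp}_{L_{\mathcal Q(G)}}(\mathbf e_a-\mathbf e_b)$ if and only if $\theta^{-}\in \mathrm{supp}_{L_{\mathcal Q(G)}}(\mathbf e_a-\mathbf e_b)$. Moreover, if $\mathbf e_a-\mathbf e_b$ and $\mathbf e_c-\mathbf e_d$ are two pair states of $\mathcal Q(G)$ that are Laplacian strongly cospectral, then $\theta^+\in\Lambda^+_{ab,cd}$ if and only if $\theta^-\in\Lambda^+_{ab,cd}$, and $\theta^+\in\Lambda^-_{ab,cd}$ if and only if $\theta^-\in\Lambda^-_{ab,cd}$.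
   Context: For a simple graph $H$, $L_H=D_H-A_H$ is its Laplacian (degree matrix minus adjacency matrix), and $L_H=\sum_\theta \theta F_\theta$ its spectral decomposition over distinct eigenvalues, with $F_\theta$ the orthogonal projection onto the $\theta$-eigenspace. $\mathbf e_u$ is the characteristic vector of vertex $u$; for distinct vertices $a,b$, $\mathbf e_a-\mathbf e_b$ is a pair state, and $\mathrm{supp}_{L_H}(\mathbf e_a-\mathbf e_b)=\{\theta: F_\theta(\mathbf e_a-\mathbf e_b)\neq \mathbf 0\}$. Two pair states $\mathbf e_a-\mathbf e_b$, $\mathbf e_c-\mathbf e_d$ are Laplacian strongly cospectral if $F_\theta(\mathbf e_a-\mathbf e_b)=\pm F_\theta(\mathbf e_c-\mathbf e_d)$ for every eigenvalue $\theta$ of $L_H$. Set $\Lambda^{\pm}_{ab,cd}=\{\theta\in\mathrm{supp}_{L_H}(\mathbf e_a-\mathbf e_b): F_\theta(\mathbf e_a-\mathbf e_b)=\pm F_\theta(\mathbf e_c-\mathbf e_d)\}$ (here $H=\mathcal Q(G)$). The Q-graph $\mathcal Q(G)$ is obtained from $G$ by inserting a new vertex into each edge of $G$ and joining by an edge each pair of new vertices lying on adjacent (incident) edges of $G$; the set of new vertices is $I(G)$, so $V(\mathcal Q(G))=V(G)\cup I(G)$. For a Laplacian eigenvalue $\theta$ of $G$, $\theta^{\pm}=\frac12\big(\theta+2+r\pm\sqrt{(r+2-\theta)^2+4\theta}\big)$; these are Laplacian eigenvalues of $\mathcal Q(G)$. *)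

theory Defs
  imports Complex_Main
begin

definition simple_graph :: "'v set \<Rightarrow> ('v \<Rightarrow> 'v \<Rightarrow> bool) \<Rightarrow> bool" where
  "simple_graph V E \<longleftrightarrow> finite V \<and> (\<forall>u v. E u v \<longrightarrow> u \<in> V \<and> v \<in> V \<and> u \<noteq> v \<and> E v u)"

definition degree :: "'v set \<Rightarrow> ('v \<Rightarrow> 'v \<Rightarrow> bool) \<Rightarrow> 'v \<Rightarrow> nat" where
  "degree V E u = card {w \<in> V. E u w}"

definition regular_graph :: "'v set \<Rightarrow> ('v \<Rightarrow> 'v \<Rightarrow> bool) \<Rightarrow> nat \<Rightarrow> bool" where
  "regular_graph V E r \<longleftrightarrow> simple_graph V E \<and> (\<forall>v\<in>V. degree V E v = r)"

definition laplacian :: "'v set \<Rightarrow> ('v \<Rightarrow> 'v \<Rightarrow> bool) \<Rightarrow> ('v \<Rightarrow> real) \<Rightarrow> ('v \<Rightarrow> real)" where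
  "laplacian V E x = (\<lambda>u. if u \<in> V then real (degree V E u) * x u - (\<Sum>w\<in>{w\<in>V. E u w}. x w) else 0)"

definition vecs :: "'v set \<Rightarrow> ('v \<Rightarrow> real) set" where
  "vecs V = {x. \<forall>u. u \<notin> V \<longrightarrow> x u = 0}"

definition vinner :: "'v set \<Rightarrow> ('v \<Rightarrow> real) \<Rightarrow> ('v \<Rightarrow> real) \<Rightarrow> real" where
  "vinner V x y = (\<Sum>u\<in>V. x u * y u)"

definition lap_eigenspace :: "'v set \<Rightarrow> ('v \<Rightarrow> 'v \<Rightarrow> bool) \<Rightarrow> real \<Rightarrow> ('v \<Rightarrow> real) set" where
  "lap_eigenspace V E \<theta> = {x \<in> vecs V. laplacian V E x = (\<lambda>u. \<theta> * x u)}"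

definition lap_eigenvalue :: "'v set \<Rightarrow> ('v \<Rightarrow> 'v \<Rightarrow> bool) \<Rightarrow> real \<Rightarrow> bool" where
  "lap_eigenvalue V E \<theta> \<longleftrightarrow> (\<exists>x \<in> lap_eigenspace V E \<theta>. x \<noteq> (\<lambda>_. 0))"

definition eig_proj :: "'v set \<Rightarrow> ('v \<Rightarrow> 'v \<Rightarrow> bool) \<Rightarrow> real \<Rightarrow> ('v \<Rightarrow> real) \<Rightarrow> ('v \<Rightarrow> real)" where
  "eig_proj V E \<theta> x = (THE y. y \<in> lap_eigenspace V E \<theta> \<and>
      (\<forall>w \<in> lap_eigenspace V E \<theta>. vinner V (\<lambda>u. x u - y u) w = 0))"

definition char_vec :: "'v \<Rightarrow> ('v \<Rightarrow> real)" where
  "char_vec a = (\<lambda>u. if u = a then 1 else 0)"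

definition pair_state :: "'v \<Rightarrow> 'v \<Rightarrow> ('v \<Rightarrow> real)" where
  "pair_state a b = (\<lambda>u. char_vec a u - char_vec b u)"

definition lap_supp :: "'v set \<Rightarrow> ('v \<Rightarrow> 'v \<Rightarrow> bool) \<Rightarrow> ('v \<Rightarrow> real) \<Rightarrow> real set" where
  "lap_supp V E x = {\<theta>. lap_eigenvalue V E \<theta> \<and> eig_proj V E \<theta> x \<noteq> (\<lambda>_. 0)}"

definition lap_strongly_cospectral ::
  "'v set \<Rightarrow> ('v \<Rightarrow> 'v \<Rightarrow> bool) \<Rightarrow> 'v \<Rightarrow> 'v \<Rightarrow> 'v \<Rightarrow> 'v \<Rightarrow> bool" where
  "lap_strongly_cospectral V E a b c d \<longleftrightarrow>
     (\<forall>\<theta>. lap_eigenvalue V E \<theta> \<longrightarrow>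
        eig_proj V E \<theta> (pair_state a b) = eig_proj V E \<theta> (pair_state c d) \<or>
        eig_proj V E \<theta> (pair_state a b) = (\<lambda>u. - eig_proj V E \<theta> (pair_state c d) u))"

definition Lambda_plus :: "'v set \<Rightarrow> ('v \<Rightarrow> 'v \<Rightarrow> bool) \<Rightarrow> 'v \<Rightarrow> 'v \<Rightarrow> 'v \<Rightarrow> 'v \<Rightarrow> real set" where
  "Lambda_plus V E a b c d = {\<theta> \<in> lap_supp V E (pair_state a b).
     eig_proj V E \<theta> (pair_state a b) = eig_proj V E \<theta> (pair_state c d)}"

definition Lambda_minus :: "'v set \<Rightarrow> ('v \<Rightarrow> 'v \<Rightarrow> bool) \<Rightarrow> 'v \<Rightarrow> 'v \<Rightarrow> 'v \<Rightarrow> 'v \<Rightarrow> real set" where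
  "Lambda_minus V E a b c d = {\<theta> \<in> lap_supp V E (pair_state a b).
     eig_proj V E \<theta> (pair_state a b) = (\<lambda>u. - eig_proj V E \<theta> (pair_state c d) u)}"

text \<open>Q-graph. Original vertices are Inl v, new (edge) vertices are Inr e for e = {u,v} an edge.\<close>
definition edge_set :: "('v \<Rightarrow> 'v \<Rightarrow> bool) \<Rightarrow> 'v set set" where
  "edge_set E = {{u, v} | u v. E u v}"

definition Q_vertices :: "'v set \<Rightarrow> ('v \<Rightarrow> 'v \<Rightarrow> bool) \<Rightarrow> ('v + 'v set) set" where
  "Q_vertices V E = Inl ` V \<union> Inr ` edge_set E"

definition Q_adj :: "('v \<Rightarrow> 'v \<Rightarrow> bool) \<Rightarrow> ('v + 'v set) \<Rightarrow> ('v + 'v set) \<Rightarrow> bool" where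
  "Q_adj E x y = (case (x, y) of
       (Inl u, Inr e) \<Rightarrow> e \<in> edge_set E \<and> u \<in> e
     | (Inr e, Inl u) \<Rightarrow> e \<in> edge_set E \<and> u \<in> e
     | (Inr e, Inr f) \<Rightarrow> e \<in> edge_set E \<and> f \<in> edge_set E \<and> e \<noteq> f \<and> e \<inter> f \<noteq> {}
     | (Inl _, Inl _) \<Rightarrow> False)"

definition theta_plus :: "nat \<Rightarrow> real \<Rightarrow> real" where
  "theta_plus r \<theta> = (\<theta> + 2 + real r + sqrt ((real r + 2 - \<theta>)^2 + 4 * \<theta>)) / 2"

definition theta_minus :: "nat \<Rightarrow> real \<Rightarrow> real" where
  "theta_minus r \<theta> = (\<theta> + 2 + real r - sqrt ((real r + 2 - \<theta>)^2 + 4 * \<theta>)) / 2"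

end

theory Submission
  imports Defs "HOL-Analysis.Analysis"
begin

text \<open>
  Let R be the vertex-edge incidence matrix of the r-regular graph G, so that R R^T = 2 r I - L.
  On a vector (p, q) of Q(G), split into its vertex and edge parts, the Laplacian of Q(G) acts as
  (r p - R q, (2 r + 2) q - R^T p - R^T R q). Hence, for an eigenvalue \<theta> of L and l one of the
  roots \<theta>+, \<theta>- of l^2 - (r + 2 + \<theta>) l + (r + 1) \<theta>, the l-eigenvectors of Q(G) are the
  vectors (x, c R^T x) with L x = \<theta> x, where c = (r + 1 - l) / (2 r + 2 - l) \<noteq> 0, and the
  l-projection of (p, q) is the lift of a positive multiple of F_\<theta> (p + c R q). For the pair
  state of two vertices of G this is F_\<theta> (e_a - e_b), for two edge vertices c F_\<theta> (R (e_a - e_b));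
  in both cases it depends on l only through a nonzero factor, so l = \<theta>+ and l = \<theta>- behave
  alike. For the strong cospectrality statement it remains to see that a pair state strongly
  cospectral to e_a - e_b is of the same kind. Equal norms of the projections at \<theta>+ and \<theta>-
  are one quadratic identity in c evaluated at the two values c+ and c-, hence give a linear
  identity between the \<theta>-projections of p and R q. Summed over the spectrum, these identities
  relate \<langle>p, p\<rangle>, \<langle>p, L p\<rangle>, \<langle>L p, L p\<rangle>, \<langle>p, R q\<rangle> and \<langle>L p, R q\<rangle>, and they fail for pair
  states of different kinds.
\<close>

section \<open>Vectors supported on a finite set\<close>

lemma vinner_commute: "vinner V x y = vinner V y x"
  unfolding vinner_def by (simp add: mult.commute)

lemma vinner_add_left: "vinner V (\<lambda>u. x u + y u) z = vinner V x z + vinner V y z"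
  unfolding vinner_def by (simp add: sum.distrib algebra_simps)

lemma vinner_diff_left: "vinner V (\<lambda>u. x u - y u) z = vinner V x z - vinner V y z"
  unfolding vinner_def by (simp add: sum_subtractf algebra_simps)

lemma vinner_scale_left: "vinner V (\<lambda>u. t * x u) y = t * vinner V x y"
  unfolding vinner_def by (simp add: sum_distrib_left algebra_simps)

lemma vinner_scale_right: "vinner V x (\<lambda>u. t * y u) = t * vinner V x y"
  unfolding vinner_def by (simp add: sum_distrib_left algebra_simps)

lemma vinner_minus_right: "vinner V x (\<lambda>u. - y u) = - vinner V x y"
  unfolding vinner_def by (simp add: sum_negf)

lemma vinner_zero_left [simp]: "vinner V (\<lambda>_. 0) y = 0"
  unfolding vinner_def by simp

lemma vinner_zero_right [simp]: "vinner V y (\<lambda>_. 0) = 0"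
  unfolding vinner_def by simp

lemma vinner_sum_right: "vinner V z (\<lambda>u. \<Sum>i\<in>T. c i * f i u) = (\<Sum>i\<in>T. c i * vinner V z (f i))"
proof -
  have "(\<Sum>u\<in>V. z u * (\<Sum>i\<in>T. c i * f i u)) = (\<Sum>u\<in>V. \<Sum>i\<in>T. c i * (z u * f i u))"
    by (simp add: sum_distrib_left mult.left_commute)
  also have "\<dots> = (\<Sum>i\<in>T. c i * (\<Sum>u\<in>V. z u * f i u))"
    by (subst sum.swap) (simp add: sum_distrib_left)
  finally show ?thesis unfolding vinner_def .
qed

lemma vinner_sum_left: "vinner V (\<lambda>u. \<Sum>i\<in>T. c i * f i u) z = (\<Sum>i\<in>T. c i * vinner V (f i) z)"
  by (simp add: vinner_commute[of V _ z] vinner_sum_right)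

lemma vinner_add_scaled:
  "vinner V (\<lambda>u. a u + t * b u) (\<lambda>u. c u + t * d u)
     = vinner V a c + t * (vinner V a d + vinner V b c) + t\<^sup>2 * vinner V b d"
proof -
  have "(\<Sum>u\<in>V. (a u + t * b u) * (c u + t * d u))
      = (\<Sum>u\<in>V. a u * c u + t * (a u * d u) + t * (b u * c u) + t\<^sup>2 * (b u * d u))"
    by (rule sum.cong) (auto simp: algebra_simps power2_eq_square)
  also have "\<dots> = (\<Sum>u\<in>V. a u * c u) + t * (\<Sum>u\<in>V. a u * d u) + t * (\<Sum>u\<in>V. b u * c u)
      + t\<^sup>2 * (\<Sum>u\<in>V. b u * d u)"
    by (simp add: sum.distrib sum_distrib_left)
  finally show ?thesis unfolding vinner_def by (simp add: algebra_simps)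
qed

lemma vinner_self_add_scaled:
  "vinner V (\<lambda>u. a u + t * b u) (\<lambda>u. a u + t * b u)
     = vinner V a a + 2 * t * vinner V a b + t\<^sup>2 * vinner V b b"
  unfolding vinner_add_scaled vinner_commute[of V b a] by (simp add: algebra_simps)

lemma vinner_self_nonneg: "0 \<le> vinner V x x"
  unfolding vinner_def by (simp add: sum_nonneg)

lemma vinner_self_eq_0_iff:
  assumes "finite V"
  shows "vinner V x x = 0 \<longleftrightarrow> (\<forall>u\<in>V. x u = 0)"
  unfolding vinner_def using assms by (simp add: sum_nonneg_eq_0_iff)

lemma vecs_eqI:
  assumes "x \<in> vecs V" "y \<in> vecs V" "\<And>u. u \<in> V \<Longrightarrow> x u = y u"
  shows "x = y"
proof
  fix u show "x u = y u" using assms unfolding vecs_def by (cases "u \<in> V") auto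
qed

lemma vinner_self_pos:
  assumes "finite V" "x \<in> vecs V" "x \<noteq> (\<lambda>_. 0)"
  shows "0 < vinner V x x"
proof -
  have "\<not> (\<forall>u\<in>V. x u = 0)"
  proof
    assume "\<forall>u\<in>V. x u = 0"
    then have "x = (\<lambda>_. 0)" using assms(2) by (intro vecs_eqI) (auto simp: vecs_def)
    then show False using assms(3) by simp
  qed
  then have "vinner V x x \<noteq> 0" using vinner_self_eq_0_iff[OF assms(1)] by blast
  then show ?thesis using vinner_self_nonneg[of V x] by linarith
qed

lemma vinner_self_normalize:
  assumes "0 < vinner V x x"
  defines "s \<equiv> 1 / sqrt (vinner V x x)"
  shows "vinner V (\<lambda>u. s * x u) (\<lambda>u. s * x u) = 1"
proof -
  have "sqrt (vinner V x x) * sqrt (vinner V x x) = vinner V x x" using assms(1) by simp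
  then show ?thesis
    unfolding s_def vinner_scale_left vinner_scale_right using assms(1) by (simp add: field_simps)
qed

lemma square_le_vinner_self:
  assumes "finite V" "u \<in> V"
  shows "(x u)\<^sup>2 \<le> vinner V x x"
  unfolding vinner_def power2_eq_square using assms by (intro member_le_sum) auto

lemma vinner_char_vec_left:
  assumes "finite V" "u \<in> V"
  shows "vinner V (char_vec u) g = g u"
proof -
  have "vinner V (char_vec u) g = (\<Sum>v\<in>V. if v = u then g v else 0)"
    unfolding vinner_def char_vec_def by (intro sum.cong) auto
  then show ?thesis using assms by (simp add: sum.delta')
qed

lemma vinner_vecs_eq_0_imp_eq:
  assumes "finite V" "x \<in> vecs V" "y \<in> vecs V" "vinner V (\<lambda>u. x u - y u) (\<lambda>u. x u - y u) = 0"
  shows "x = y"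
proof (rule vecs_eqI)
  show "x u = y u" if "u \<in> V" for u
    using assms(4) vinner_self_eq_0_iff[OF assms(1)] that by auto
qed (use assms in auto)

lemma nonneg_quadratic_linear_coeff_zero:
  fixes a b :: real
  assumes "\<And>t. 0 \<le> a * t + b * t\<^sup>2"
  shows "a = 0"
proof (rule ccontr)
  assume "a \<noteq> 0"
  define s where "s = \<bar>b\<bar> + 1"
  have "s > 0" unfolding s_def by simp
  have "a * (- a / s) + b * (- a / s)\<^sup>2 = a\<^sup>2 * (b - s) / s\<^sup>2"
    using \<open>s > 0\<close> by (simp add: field_simps power2_eq_square)
  also have "\<dots> < 0"
    using \<open>a \<noteq> 0\<close> \<open>s > 0\<close> unfolding s_def by (intro divide_neg_pos mult_pos_neg) auto
  finally show False using assms[of "- a / s"] by simp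
qed

lemma continuous_on_coordinate [continuous_intros]: "continuous_on S (\<lambda>y::'a \<Rightarrow> real. y u)"
  by (rule continuous_on_subset[OF continuous_on_product_coordinates]) simp

lemma continuous_on_vinner [continuous_intros]:
  assumes "\<And>u. continuous_on S (\<lambda>y. f y u)" "\<And>u. continuous_on S (\<lambda>y. g y u)"
  shows "continuous_on S (\<lambda>y. vinner V (f y) (g y))"
  unfolding vinner_def by (intro continuous_intros assms)

lemma continuous_on_if_const [continuous_intros]:
  "continuous_on S f \<Longrightarrow> continuous_on S g \<Longrightarrow> continuous_on S (\<lambda>x. if P then f x else g x)"
  by (cases P) auto

lemma compact_vecs_box:
  "compact {y::'a \<Rightarrow> real. \<forall>u. y u \<in> (if u \<in> V then {-M..M} else {0})}"
proof -
  define S where "S = (\<lambda>u::'a. if u \<in> V then {-M..M} else {0::real})"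
  have "compactin (product_topology (\<lambda>i. euclidean) UNIV) (PiE UNIV S)"
    by (subst compactin_PiE) (auto simp: S_def compactin_euclidean_iff)
  then have "compact (PiE UNIV S)"
    by (metis euclidean_product_topology compactin_euclidean_iff)
  moreover have "PiE UNIV S = {y. \<forall>u. y u \<in> S u}"
    by (auto simp: PiE_def Pi_def)
  ultimately show ?thesis unfolding S_def by simp
qed

lemma compact_vecs_closed_bounded:
  assumes "finite V" "closed C" "C \<subseteq> vecs V" "\<And>y. y \<in> C \<Longrightarrow> vinner V y y \<le> R"
  shows "compact C"
proof -
  let ?B = "{y::'a \<Rightarrow> real. \<forall>u. y u \<in> (if u \<in> V then {-(R + 1)..R + 1} else {0})}"
  have "\<bar>y u\<bar> \<le> R + 1" if "y \<in> C" "u \<in> V" for y u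
  proof -
    have "(y u)\<^sup>2 \<le> R"
      using square_le_vinner_self[OF assms(1) that(2), of y] assms(4)[OF that(1)] by linarith
    moreover have "\<bar>y u\<bar> \<le> (y u)\<^sup>2 + 1"
      using zero_le_power2[of "\<bar>y u\<bar> - 1"] by (simp add: power2_eq_square algebra_simps)
    ultimately show ?thesis by linarith
  qed
  then have "C \<subseteq> ?B"
    using assms(3) unfolding vecs_def by (force simp: abs_le_iff)
  then have "C = C \<inter> ?B" by blast
  with closed_Int_compact[OF assms(2) compact_vecs_box[of V "R + 1"]] show ?thesis by simp
qed

definition vec_subspace :: "'a set \<Rightarrow> ('a \<Rightarrow> real) set \<Rightarrow> bool" where
  "vec_subspace V W \<longleftrightarrow> W \<subseteq> vecs V \<and> (\<lambda>_. 0) \<in> W \<and>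
     (\<forall>w1\<in>W. \<forall>w2\<in>W. \<forall>t. (\<lambda>u. w1 u + t * w2 u) \<in> W)"

lemma vec_subspace_add_scaled:
  "vec_subspace V W \<Longrightarrow> w1 \<in> W \<Longrightarrow> w2 \<in> W \<Longrightarrow> (\<lambda>u. w1 u + t * w2 u) \<in> W"
  unfolding vec_subspace_def by blast

lemma vec_subspace_scale:
  assumes "vec_subspace V W" "w \<in> W"
  shows "(\<lambda>u. t * w u) \<in> W"
  using vec_subspace_add_scaled[OF assms(1) _ assms(2), of "\<lambda>_. 0" t] assms(1)
  by (simp add: vec_subspace_def)

text \<open>The closest point exists by compactness: it suffices to
  search the part of W of squared norm at most 4 times that of x.\<close>

lemma vec_subspace_closest_point_exists:
  assumes fin: "finite V" and "closed W" and W: "vec_subspace V W"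
  shows "\<exists>y\<in>W. \<forall>w\<in>W. vinner V (\<lambda>u. x u - y u) (\<lambda>u. x u - y u) \<le> vinner V (\<lambda>u. x u - w u) (\<lambda>u. x u - w u)"
proof -
  define \<psi> where "\<psi> w = vinner V (\<lambda>u. x u - w u) (\<lambda>u. x u - w u)" for w
  define R where "R = 4 * vinner V x x"
  define K where "K = W \<inter> {w. vinner V w w \<le> R}"
  have "closed {w::'a \<Rightarrow> real. vinner V w w \<le> R}"
    by (intro closed_Collect_le continuous_intros)
  then have "compact K"
    using \<open>closed W\<close> W unfolding K_def vec_subspace_def
    by (intro compact_vecs_closed_bounded[OF fin, of _ R]) auto
  moreover have "(\<lambda>_. 0) \<in> K"
    using W vinner_self_nonneg[of V x] unfolding K_def R_def vec_subspace_def by simp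
  moreover have "continuous_on K \<psi>" unfolding \<psi>_def by (intro continuous_intros)
  ultimately obtain y where "y \<in> K" and y_min: "\<And>w. w \<in> K \<Longrightarrow> \<psi> y \<le> \<psi> w"
    using continuous_attains_inf[of K \<psi>] by blast
  have "\<psi> y \<le> \<psi> w" if "w \<in> W" for w
  proof (cases "vinner V w w \<le> R")
    case True
    then show ?thesis using that y_min unfolding K_def by simp
  next
    case False
    have "\<psi> w - (vinner V w w / 2 - vinner V x x)
        = (\<Sum>u\<in>V. (x u - w u) * (x u - w u) - (w u * w u / 2 - x u * x u))"
      unfolding \<psi>_def vinner_def by (simp add: sum_subtractf sum_divide_distrib)
    also have "\<dots> = vinner V (\<lambda>u. 2 * x u - w u) (\<lambda>u. 2 * x u - w u) / 2"
      unfolding vinner_def sum_divide_distrib by (rule sum.cong) (auto simp: algebra_simps)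
    finally have "vinner V w w / 2 - vinner V x x \<le> \<psi> w"
      using vinner_self_nonneg[of V "\<lambda>u. 2 * x u - w u"] by linarith
    moreover have "\<psi> y \<le> \<psi> (\<lambda>_. 0)" "\<psi> (\<lambda>_. 0) = vinner V x x"
      using y_min[OF \<open>(\<lambda>_. 0) \<in> K\<close>] unfolding \<psi>_def by simp_all
    ultimately show ?thesis using False unfolding R_def by linarith
  qed
  then show ?thesis using \<open>y \<in> K\<close> unfolding K_def \<psi>_def by blast
qed

lemma vec_subspace_closest_point_orthogonal:
  assumes W: "vec_subspace V W" and "y \<in> W"
    and y_min: "\<And>w. w \<in> W \<Longrightarrow>
      vinner V (\<lambda>u. x u - y u) (\<lambda>u. x u - y u) \<le> vinner V (\<lambda>u. x u - w u) (\<lambda>u. x u - w u)"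
    and "h \<in> W"
  shows "vinner V (\<lambda>u. x u - y u) h = 0"
proof -
  let ?d = "\<lambda>u. x u - y u"
  have "0 \<le> (2 * vinner V ?d h) * t + vinner V h h * t\<^sup>2" for t
  proof -
    have "vinner V ?d ?d \<le> vinner V (\<lambda>u. x u - (y u + (- t) * h u)) (\<lambda>u. x u - (y u + (- t) * h u))"
      using y_min[OF vec_subspace_add_scaled[OF W \<open>y \<in> W\<close> \<open>h \<in> W\<close>]] .
    also have "(\<lambda>u. x u - (y u + (- t) * h u)) = (\<lambda>u. ?d u + t * h u)"
      by (simp add: algebra_simps)
    finally show ?thesis unfolding vinner_self_add_scaled by (simp add: algebra_simps)
  qed
  then show ?thesis using nonneg_quadratic_linear_coeff_zero by fastforce
qed

lemma orthogonal_projection_exists: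
  assumes "finite V" "closed W" "vec_subspace V W"
  shows "\<exists>y\<in>W. \<forall>w\<in>W. vinner V (\<lambda>u. x u - y u) w = 0"
  using vec_subspace_closest_point_exists[OF assms, of x]
    vec_subspace_closest_point_orthogonal[OF assms(3)] by metis

lemma orthogonal_projection_unique:
  assumes fin: "finite V" and W: "vec_subspace V W" and "y1 \<in> W" "y2 \<in> W"
    and "\<forall>w\<in>W. vinner V (\<lambda>u. x u - y1 u) w = 0"
    and "\<forall>w\<in>W. vinner V (\<lambda>u. x u - y2 u) w = 0"
  shows "y1 = y2"
proof -
  define d where "d = (\<lambda>u. y1 u + (-1) * y2 u)"
  have "d \<in> W" using W assms(3,4) unfolding d_def by (rule vec_subspace_add_scaled)
  have "vinner V d d = vinner V (\<lambda>u. x u - y2 u) d - vinner V (\<lambda>u. x u - y1 u) d"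
    unfolding vinner_def d_def by (simp add: sum_subtractf[symmetric] algebra_simps)
  then have "vinner V (\<lambda>u. y1 u - y2 u) (\<lambda>u. y1 u - y2 u) = 0"
    using assms(5,6) \<open>d \<in> W\<close> unfolding d_def by simp
  then show ?thesis
    using W assms(3,4) unfolding vec_subspace_def by (intro vinner_vecs_eq_0_imp_eq[OF fin]) auto
qed

section \<open>Spectral decomposition of a graph Laplacian\<close>

lemma laplacian_add_scaled:
  "laplacian V E (\<lambda>u. a * x u + b * y u) = (\<lambda>u. a * laplacian V E x u + b * laplacian V E y u)"
  unfolding laplacian_def by (rule ext) (simp add: sum.distrib sum_distrib_left algebra_simps)

lemma laplacian_scale: "laplacian V E (\<lambda>u. a * x u) = (\<lambda>u. a * laplacian V E x u)"
  unfolding laplacian_def by (rule ext) (simp add: sum_distrib_left algebra_simps)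

lemma laplacian_zero [simp]: "laplacian V E (\<lambda>_. 0) = (\<lambda>_. 0)"
  unfolding laplacian_def by auto

lemma laplacian_power_zero [simp]: "(laplacian V E ^^ k) (\<lambda>_. 0) = (\<lambda>_. 0)"
  by (induction k) auto

lemma laplacian_in_vecs: "laplacian V E x \<in> vecs V"
  unfolding laplacian_def vecs_def by simp

lemma continuous_on_laplacian [continuous_intros]: "continuous_on S (\<lambda>x. laplacian V E x u)"
  unfolding laplacian_def by (intro continuous_intros)

lemma laplacian_symmetric:
  assumes "simple_graph V E"
  shows "vinner V x (laplacian V E y) = vinner V (laplacian V E x) y"
proof -
  have fin: "finite V" and sym: "\<And>u w. E u w \<Longrightarrow> E w u"
    using assms unfolding simple_graph_def by auto
  have "(\<Sum>u\<in>V. x u * (\<Sum>w\<in>{w \<in> V. E u w}. y w)) = (\<Sum>u\<in>V. \<Sum>w\<in>V. if E u w then x u * y w else 0)"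
    by (simp add: sum_distrib_left sum.inter_filter[OF fin, symmetric] if_distrib cong: if_cong)
  also have "\<dots> = (\<Sum>w\<in>V. \<Sum>u\<in>V. if E u w then x u * y w else 0)" by (rule sum.swap)
  also have "\<dots> = (\<Sum>w\<in>V. \<Sum>u\<in>V. if E w u then y w * x u else 0)"
    using sym by (intro sum.cong refl) (auto simp: mult.commute)
  also have "\<dots> = (\<Sum>u\<in>V. y u * (\<Sum>w\<in>{w \<in> V. E u w}. x w))"
    by (simp add: sum_distrib_left sum.inter_filter[OF fin, symmetric] if_distrib cong: if_cong)
  finally show ?thesis
    unfolding vinner_def laplacian_def
    by (simp add: right_diff_distrib left_diff_distrib sum_subtractf algebra_simps)
qed

lemma lap_eigenspace_vecs: "x \<in> lap_eigenspace V E \<theta> \<Longrightarrow> x \<in> vecs V"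
  unfolding lap_eigenspace_def by auto

lemma lap_eigenspace_laplacian:
  "x \<in> lap_eigenspace V E \<theta> \<Longrightarrow> laplacian V E x = (\<lambda>u. \<theta> * x u)"
  unfolding lap_eigenspace_def by auto

lemma vec_subspace_lap_eigenspace: "vec_subspace V (lap_eigenspace V E \<theta>)"
  unfolding vec_subspace_def lap_eigenspace_def
proof (intro conjI ballI allI)
  show "(\<lambda>_. 0) \<in> {x \<in> vecs V. laplacian V E x = (\<lambda>u. \<theta> * x u)}"
    by (simp add: vecs_def)
next
  fix w1 w2 t
  assume "w1 \<in> {x \<in> vecs V. laplacian V E x = (\<lambda>u. \<theta> * x u)}"
    and "w2 \<in> {x \<in> vecs V. laplacian V E x = (\<lambda>u. \<theta> * x u)}"
  then show "(\<lambda>u. w1 u + t * w2 u) \<in> {x \<in> vecs V. laplacian V E x = (\<lambda>u. \<theta> * x u)}"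
    using laplacian_add_scaled[of V E 1 w1 t w2] by (auto simp: vecs_def algebra_simps)
qed auto

lemma lap_eigenspace_scale:
  "x \<in> lap_eigenspace V E \<theta> \<Longrightarrow> (\<lambda>u. t * x u) \<in> lap_eigenspace V E \<theta>"
  by (rule vec_subspace_scale[OF vec_subspace_lap_eigenspace])

lemma zero_in_lap_eigenspace: "(\<lambda>_. 0) \<in> lap_eigenspace V E \<theta>"
  using vec_subspace_lap_eigenspace unfolding vec_subspace_def by blast

lemma closed_lap_eigenspace: "closed (lap_eigenspace V E \<theta>)"
proof -
  have "lap_eigenspace V E \<theta>
      = {x. \<forall>u. (if u \<in> V then 0 else x u) = 0 \<and> laplacian V E x u = \<theta> * x u}"
    unfolding lap_eigenspace_def vecs_def by (auto simp: fun_eq_iff)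
  also have "closed \<dots>"
    by (intro closed_Collect_all closed_Collect_conj closed_Collect_eq continuous_intros)
  finally show ?thesis .
qed

lemma lap_eigenspaces_orthogonal:
  assumes "simple_graph V E" "x \<in> lap_eigenspace V E \<theta>" "y \<in> lap_eigenspace V E \<mu>" "\<theta> \<noteq> \<mu>"
  shows "vinner V x y = 0"
proof -
  have "\<theta> * vinner V x y = vinner V (laplacian V E x) y"
    using lap_eigenspace_laplacian[OF assms(2)] by (simp add: vinner_scale_left)
  also have "\<dots> = vinner V x (laplacian V E y)" using laplacian_symmetric[OF assms(1)] by simp
  also have "\<dots> = \<mu> * vinner V x y"
    using lap_eigenspace_laplacian[OF assms(3)] by (simp add: vinner_scale_right)
  finally show ?thesis using assms(4) by simp
qed

lemma eig_proj_characterization: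
  assumes "finite V"
  shows "eig_proj V E \<theta> x \<in> lap_eigenspace V E \<theta>"
    and "\<And>w. w \<in> lap_eigenspace V E \<theta> \<Longrightarrow> vinner V (\<lambda>u. x u - eig_proj V E \<theta> x u) w = 0"
proof -
  let ?P = "\<lambda>y. y \<in> lap_eigenspace V E \<theta> \<and>
    (\<forall>w\<in>lap_eigenspace V E \<theta>. vinner V (\<lambda>u. x u - y u) w = 0)"
  have "\<exists>!y. ?P y"
    using orthogonal_projection_exists[OF assms closed_lap_eigenspace vec_subspace_lap_eigenspace]
      orthogonal_projection_unique[OF assms vec_subspace_lap_eigenspace] by blast
  then have "?P (eig_proj V E \<theta> x)" unfolding eig_proj_def by (rule theI')
  then show "eig_proj V E \<theta> x \<in> lap_eigenspace V E \<theta>"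
    and "\<And>w. w \<in> lap_eigenspace V E \<theta> \<Longrightarrow> vinner V (\<lambda>u. x u - eig_proj V E \<theta> x u) w = 0"
    by blast+
qed

lemma eig_proj_eqI:
  assumes "finite V" "y \<in> lap_eigenspace V E \<theta>"
    and "\<And>w. w \<in> lap_eigenspace V E \<theta> \<Longrightarrow> vinner V (\<lambda>u. x u - y u) w = 0"
  shows "eig_proj V E \<theta> x = y"
  using orthogonal_projection_unique[OF assms(1) vec_subspace_lap_eigenspace]
    eig_proj_characterization[OF assms(1)] assms(2,3) by blast

lemma vinner_eig_proj_right:
  assumes "finite V"
  shows "vinner V x (eig_proj V E \<theta> y) = vinner V (eig_proj V E \<theta> x) (eig_proj V E \<theta> y)"
proof -
  have "vinner V (\<lambda>u. x u - eig_proj V E \<theta> x u) (eig_proj V E \<theta> y) = 0"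
    by (rule eig_proj_characterization(2)[OF assms eig_proj_characterization(1)[OF assms]])
  then show ?thesis unfolding vinner_diff_left by simp
qed

lemma eig_proj_add_scaled:
  assumes fin: "finite V"
  shows "eig_proj V E \<theta> (\<lambda>u. x u + t * y u) = (\<lambda>u. eig_proj V E \<theta> x u + t * eig_proj V E \<theta> y u)"
proof (rule eig_proj_eqI[OF fin])
  show "(\<lambda>u. eig_proj V E \<theta> x u + t * eig_proj V E \<theta> y u) \<in> lap_eigenspace V E \<theta>"
    using eig_proj_characterization(1)[OF fin]
    by (intro vec_subspace_add_scaled[OF vec_subspace_lap_eigenspace])
next
  fix w assume "w \<in> lap_eigenspace V E \<theta>"
  moreover have "(\<lambda>u. x u + t * y u - (eig_proj V E \<theta> x u + t * eig_proj V E \<theta> y u))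
      = (\<lambda>u. (x u - eig_proj V E \<theta> x u) + t * (y u - eig_proj V E \<theta> y u))"
    by (simp add: algebra_simps)
  ultimately show "vinner V (\<lambda>u. x u + t * y u - (eig_proj V E \<theta> x u + t * eig_proj V E \<theta> y u)) w = 0"
    using eig_proj_characterization(2)[OF fin] by (simp add: vinner_add_left vinner_scale_left)
qed

lemma eig_proj_scale:
  assumes "finite V"
  shows "eig_proj V E \<theta> (\<lambda>u. t * y u) = (\<lambda>u. t * eig_proj V E \<theta> y u)"
  using eig_proj_add_scaled[OF assms, of E \<theta> "\<lambda>_. 0" t y]
    eig_proj_eqI[OF assms zero_in_lap_eigenspace, of E \<theta> "\<lambda>_. 0"] by simp

lemma eig_proj_laplacian:
  assumes sg: "simple_graph V E"
  shows "eig_proj V E \<theta> (laplacian V E y) = (\<lambda>u. \<theta> * eig_proj V E \<theta> y u)"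
proof -
  have fin: "finite V" using sg unfolding simple_graph_def by auto
  show ?thesis
  proof (rule eig_proj_eqI[OF fin])
    show "(\<lambda>u. \<theta> * eig_proj V E \<theta> y u) \<in> lap_eigenspace V E \<theta>"
      using eig_proj_characterization(1)[OF fin] by (rule lap_eigenspace_scale)
  next
    fix w assume w: "w \<in> lap_eigenspace V E \<theta>"
    have "vinner V (\<lambda>u. laplacian V E y u - \<theta> * eig_proj V E \<theta> y u) w
        = vinner V y (laplacian V E w) - \<theta> * vinner V (eig_proj V E \<theta> y) w"
      unfolding vinner_diff_left vinner_scale_left using laplacian_symmetric[OF sg] by simp
    also have "\<dots> = \<theta> * vinner V (\<lambda>u. y u - eig_proj V E \<theta> y u) w"
      using lap_eigenspace_laplacian[OF w]
      by (simp add: vinner_scale_right vinner_diff_left algebra_simps)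
    also have "\<dots> = 0" using eig_proj_characterization(2)[OF fin w] by simp
    finally show "vinner V (\<lambda>u. laplacian V E y u - \<theta> * eig_proj V E \<theta> y u) w = 0" .
  qed
qed

lemma exists_unit_lap_eigenvector:
  assumes "finite V" "lap_eigenvalue V E \<theta>"
  obtains x where "x \<in> lap_eigenspace V E \<theta>" "vinner V x x = 1"
proof -
  obtain x where x: "x \<in> lap_eigenspace V E \<theta>" "x \<noteq> (\<lambda>_. 0)"
    using assms(2) unfolding lap_eigenvalue_def by blast
  then have "0 < vinner V x x"
    using vinner_self_pos[OF assms(1) lap_eigenspace_vecs] by blast
  then show ?thesis
    using that lap_eigenspace_scale[OF x(1)] vinner_self_normalize by blast
qed

lemma bessel_inequality:
  assumes fin: "finite T"
    and orthonormal: "\<And>i j. i \<in> T \<Longrightarrow> j \<in> T \<Longrightarrow> vinner V (f i) (f j) = (if i = j then 1 else 0)"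
  shows "(\<Sum>i\<in>T. (vinner V z (f i))\<^sup>2) \<le> vinner V z z"
proof -
  define c where "c i = vinner V z (f i)" for i
  define S where "S = (\<lambda>u. \<Sum>i\<in>T. c i * f i u)"
  have "vinner V z S = (\<Sum>i\<in>T. (c i)\<^sup>2)"
    unfolding S_def vinner_sum_right c_def by (simp add: power2_eq_square)
  moreover have "vinner V S S = (\<Sum>i\<in>T. (c i)\<^sup>2)"
  proof -
    have "vinner V S (f j) = c j" if "j \<in> T" for j
    proof -
      have "vinner V S (f j) = (\<Sum>i\<in>T. c i * (if i = j then 1 else 0))"
        unfolding S_def vinner_sum_left using orthonormal that by (intro sum.cong) auto
      also have "\<dots> = c j" using fin that by (simp add: if_distrib sum.delta cong: if_cong)
      finally show ?thesis .
    qed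
    moreover have "vinner V S S = (\<Sum>i\<in>T. c i * vinner V S (f i))"
      using vinner_sum_right[where V=V and z=S and T=T and c=c and f=f] unfolding S_def[symmetric] .
    ultimately show ?thesis by (simp add: power2_eq_square)
  qed
  moreover have "0 \<le> vinner V (\<lambda>u. z u + (-1) * S u) (\<lambda>u. z u + (-1) * S u)"
    by (rule vinner_self_nonneg)
  ultimately show ?thesis unfolding vinner_self_add_scaled c_def by simp
qed

text \<open>Unit eigenvectors for distinct eigenvalues are orthonormal, so by Bessel's inequality
  against the characteristic vectors each coordinate contributes at most 1 to the sum of
  their squared norms; hence there are at most card V eigenvalues.\<close>

lemma finite_lap_eigenvalues:
  assumes sg: "simple_graph V E"
  shows "finite {\<theta>. lap_eigenvalue V E \<theta>}"
proof (rule ccontr)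
  have fin: "finite V" using sg unfolding simple_graph_def by auto
  assume "infinite {\<theta>. lap_eigenvalue V E \<theta>}"
  then obtain T where T: "T \<subseteq> {\<theta>. lap_eigenvalue V E \<theta>}" "finite T" "card T = card V + 1"
    using infinite_arbitrarily_large by blast
  define nv where "nv \<theta> = (SOME x. x \<in> lap_eigenspace V E \<theta> \<and> vinner V x x = 1)" for \<theta>
  have nv: "nv \<theta> \<in> lap_eigenspace V E \<theta> \<and> vinner V (nv \<theta>) (nv \<theta>) = 1" if \<theta>: "\<theta> \<in> T" for \<theta>
  proof -
    obtain x where "x \<in> lap_eigenspace V E \<theta>" "vinner V x x = 1"
      by (rule exists_unit_lap_eigenvector[OF fin]) (use T(1) \<theta> in auto)
    then show ?thesis
      using someI[where P = "\<lambda>x. x \<in> lap_eigenspace V E \<theta> \<and> vinner V x x = 1" and x = x]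
      unfolding nv_def by blast
  qed
  have orthonormal: "vinner V (nv i) (nv j) = (if i = j then 1 else 0)" if "i \<in> T" "j \<in> T" for i j
    using nv[OF that(1)] nv[OF that(2)] lap_eigenspaces_orthogonal[OF sg] by (cases "i = j") auto
  have "(\<Sum>\<theta>\<in>T. (nv \<theta> u)\<^sup>2) \<le> 1" if u: "u \<in> V" for u
    using bessel_inequality[OF T(2) orthonormal, of "char_vec u"]
    unfolding vinner_char_vec_left[OF fin u] by (simp add: char_vec_def)
  then have "(\<Sum>u\<in>V. \<Sum>\<theta>\<in>T. (nv \<theta> u)\<^sup>2) \<le> (\<Sum>u\<in>V. 1)"
    by (rule sum_mono)
  moreover have "real (card T) = (\<Sum>\<theta>\<in>T. vinner V (nv \<theta>) (nv \<theta>))"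
    using nv by simp
  moreover have "\<dots> = (\<Sum>u\<in>V. \<Sum>\<theta>\<in>T. (nv \<theta> u)\<^sup>2)"
    unfolding vinner_def power2_eq_square by (rule sum.swap)
  ultimately show False using T(3) by simp
qed

lemma laplacian_quadratic_form_scale:
  "vinner V (\<lambda>u. a * z u) (laplacian V E (\<lambda>u. a * z u)) = a\<^sup>2 * vinner V z (laplacian V E z)"
  unfolding laplacian_scale vinner_scale_left vinner_scale_right by (simp add: power2_eq_square)

lemma laplacian_quadratic_form_max_exists:
  assumes fin: "finite V" and "closed Y" and Y: "vec_subspace V Y" and "y \<in> Y" "y \<noteq> (\<lambda>_. 0)"
  obtains y0 where "y0 \<in> Y" "vinner V y0 y0 = 1"
    "\<And>z. z \<in> Y \<Longrightarrow> vinner V z (laplacian V E z) \<le> vinner V y0 (laplacian V E y0) * vinner V z z"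
proof -
  define g where "g z = vinner V z (laplacian V E z)" for z
  define S where "S = Y \<inter> {z. vinner V z z = 1}"
  have normalized_in_S: "(\<lambda>u. (1 / sqrt (vinner V z z)) * z u) \<in> S"
    if "z \<in> Y" "0 < vinner V z z" for z
    using vec_subspace_scale[OF Y that(1)] vinner_self_normalize[OF that(2)] unfolding S_def by blast
  have "closed {z::'a \<Rightarrow> real. vinner V z z = 1}"
    by (intro closed_Collect_eq continuous_intros)
  then have "compact S"
    using \<open>closed Y\<close> Y unfolding S_def vec_subspace_def
    by (intro compact_vecs_closed_bounded[OF fin, of _ 1]) auto
  moreover have "S \<noteq> {}"
    using normalized_in_S[OF \<open>y \<in> Y\<close>] vinner_self_pos[OF fin _ \<open>y \<noteq> (\<lambda>_. 0)\<close>] \<open>y \<in> Y\<close> Y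
    unfolding vec_subspace_def by blast
  moreover have "continuous_on S g" unfolding g_def by (intro continuous_intros)
  ultimately obtain y0 where "y0 \<in> S" and y0_max: "\<And>z. z \<in> S \<Longrightarrow> g z \<le> g y0"
    using continuous_attains_sup by metis
  have "g z \<le> g y0 * vinner V z z" if "z \<in> Y" for z
  proof (cases "vinner V z z = 0")
    case True
    then have "g z = 0"
      using vinner_self_eq_0_iff[OF fin] unfolding g_def vinner_def by simp
    then show ?thesis using True by simp
  next
    case False
    then have pos: "0 < vinner V z z" using vinner_self_nonneg[of V z] by linarith
    have "(1 / sqrt (vinner V z z))\<^sup>2 * g z \<le> g y0"
      using y0_max[OF normalized_in_S[OF that pos]] unfolding g_def laplacian_quadratic_form_scale .
    then show ?thesis using pos by (simp add: field_simps)
  qed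
  then show ?thesis using that \<open>y0 \<in> S\<close> unfolding S_def g_def by blast
qed

lemma laplacian_quadratic_form_maximizer_eigenvector:
  assumes sg: "simple_graph V E" and Y: "vec_subspace V Y"
    and invariant: "\<And>z. z \<in> Y \<Longrightarrow> laplacian V E z \<in> Y"
    and "y0 \<in> Y" "vinner V y0 y0 = 1"
    and y0_max: "\<And>z. z \<in> Y \<Longrightarrow> vinner V z (laplacian V E z) \<le> M * vinner V z z"
    and M: "M = vinner V y0 (laplacian V E y0)"
  shows "y0 \<in> lap_eigenspace V E M"
proof -
  have fin: "finite V" using sg unfolding simple_graph_def by auto
  define d where "d = (\<lambda>u. laplacian V E y0 u + (- M) * y0 u)"
  have "d \<in> Y" unfolding d_def by (rule vec_subspace_add_scaled[OF Y invariant]) fact+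
  have "vinner V d h = 0" if "h \<in> Y" for h
  proof -
    have "0 \<le> (2 * (M * vinner V y0 h - vinner V (laplacian V E y0) h)) * t
        + (M * vinner V h h - vinner V h (laplacian V E h)) * t\<^sup>2" for t
    proof -
      have "vinner V y0 (laplacian V E h) = vinner V (laplacian V E y0) h"
        by (rule laplacian_symmetric[OF sg])
      then have "vinner V (\<lambda>u. y0 u + t * h u) (laplacian V E (\<lambda>u. y0 u + t * h u))
          = M + 2 * t * vinner V (laplacian V E y0) h + t\<^sup>2 * vinner V h (laplacian V E h)"
        using laplacian_add_scaled[of V E 1 y0 t h]
        by (simp add: vinner_add_scaled M vinner_commute[of V h "laplacian V E y0"])
      moreover have "vinner V (\<lambda>u. y0 u + t * h u) (\<lambda>u. y0 u + t * h u)
          = 1 + 2 * t * vinner V y0 h + t\<^sup>2 * vinner V h h"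
        unfolding vinner_self_add_scaled \<open>vinner V y0 y0 = 1\<close> ..
      moreover have "vinner V (\<lambda>u. y0 u + t * h u) (laplacian V E (\<lambda>u. y0 u + t * h u))
          \<le> M * vinner V (\<lambda>u. y0 u + t * h u) (\<lambda>u. y0 u + t * h u)"
        using y0_max[OF vec_subspace_add_scaled[OF Y \<open>y0 \<in> Y\<close> that]] .
      ultimately show ?thesis by (simp add: algebra_simps)
    qed
    then have "2 * (M * vinner V y0 h - vinner V (laplacian V E y0) h) = 0"
      by (rule nonneg_quadratic_linear_coeff_zero)
    then show ?thesis unfolding d_def vinner_add_left vinner_scale_left by simp
  qed
  then have "vinner V (\<lambda>u. laplacian V E y0 u - M * y0 u) (\<lambda>u. laplacian V E y0 u - M * y0 u) = 0"
    using \<open>d \<in> Y\<close> unfolding d_def by simp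
  then have "laplacian V E y0 = (\<lambda>u. M * y0 u)"
    using \<open>y0 \<in> Y\<close> Y laplacian_in_vecs[of V E y0] unfolding vec_subspace_def
    by (intro vinner_vecs_eq_0_imp_eq[OF fin]) (auto simp: vecs_def)
  then show ?thesis
    using \<open>y0 \<in> Y\<close> Y unfolding lap_eigenspace_def vec_subspace_def by auto
qed

text \<open>The orthogonal complement of all eigenspaces is a closed subspace invariant under the
  Laplacian; if it were nonzero it would contain an eigenvector, which is orthogonal to itself.\<close>

lemma vec_orthogonal_to_lap_eigenspaces_eq_0:
  assumes sg: "simple_graph V E" and "y \<in> vecs V"
    and orth: "\<And>\<theta> e. e \<in> lap_eigenspace V E \<theta> \<Longrightarrow> vinner V y e = 0"
  shows "y = (\<lambda>_. 0)"
proof (rule ccontr)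
  assume "y \<noteq> (\<lambda>_. 0)"
  have fin: "finite V" using sg unfolding simple_graph_def by auto
  define Y where "Y = {y \<in> vecs V. \<forall>\<theta>. \<forall>e\<in>lap_eigenspace V E \<theta>. vinner V y e = 0}"
  have Y: "vec_subspace V Y"
    unfolding vec_subspace_def Y_def vecs_def by (auto simp: vinner_add_left vinner_scale_left)
  have "closed Y"
  proof -
    have "Y = {z. \<forall>u. (if u \<in> V then 0 else z u) = 0}
        \<inter> {z. \<forall>\<theta>. \<forall>e. e \<in> lap_eigenspace V E \<theta> \<longrightarrow> vinner V z e = 0}"
      unfolding Y_def vecs_def by auto
    also have "closed \<dots>"
      by (intro closed_Int closed_Collect_all closed_Collect_imp closed_Collect_eq
          continuous_intros open_Collect_const)
    finally show ?thesis .
  qed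
  have invariant: "laplacian V E z \<in> Y" if "z \<in> Y" for z
  proof -
    have "vinner V (laplacian V E z) e = 0" if e: "e \<in> lap_eigenspace V E \<theta>" for e \<theta>
    proof -
      have "vinner V (laplacian V E z) e = \<theta> * vinner V z e"
        using laplacian_symmetric[OF sg, of z e] lap_eigenspace_laplacian[OF e]
        by (simp add: vinner_scale_right)
      then show ?thesis using \<open>z \<in> Y\<close> e unfolding Y_def by simp
    qed
    then show ?thesis unfolding Y_def using laplacian_in_vecs by blast
  qed
  have "y \<in> Y" using assms(2) orth unfolding Y_def by blast
  then obtain y0 where "y0 \<in> Y" "vinner V y0 y0 = 1"
    "\<And>z. z \<in> Y \<Longrightarrow> vinner V z (laplacian V E z) \<le> vinner V y0 (laplacian V E y0) * vinner V z z"
    using laplacian_quadratic_form_max_exists[OF fin \<open>closed Y\<close> Y _ \<open>y \<noteq> (\<lambda>_. 0)\<close>] by blast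
  then have "y0 \<in> lap_eigenspace V E (vinner V y0 (laplacian V E y0))"
    by (intro laplacian_quadratic_form_maximizer_eigenvector[OF sg Y invariant]) auto
  then have "vinner V y0 y0 = 0" using \<open>y0 \<in> Y\<close> unfolding Y_def by blast
  then show False using \<open>vinner V y0 y0 = 1\<close> by simp
qed

lemma sum_eig_proj:
  assumes sg: "simple_graph V E" and "u \<in> V"
  shows "(\<Sum>\<theta>\<in>{\<theta>. lap_eigenvalue V E \<theta>}. eig_proj V E \<theta> y u) = y u"
proof -
  have fin: "finite V" using sg unfolding simple_graph_def by auto
  let ?\<Theta> = "{\<theta>. lap_eigenvalue V E \<theta>}"
  define res where "res = (\<lambda>u. if u \<in> V then y u - (\<Sum>\<theta>\<in>?\<Theta>. 1 * eig_proj V E \<theta> y u) else 0)"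
  have "vinner V res e = 0" if e: "e \<in> lap_eigenspace V E \<mu>" for e \<mu>
  proof (cases "lap_eigenvalue V E \<mu>")
    case False
    then have "e = (\<lambda>_. 0)" using e unfolding lap_eigenvalue_def by blast
    then show ?thesis by simp
  next
    case True
    have "vinner V res e = vinner V (\<lambda>u. y u - (\<Sum>\<theta>\<in>?\<Theta>. 1 * eig_proj V E \<theta> y u)) e"
      unfolding vinner_def res_def by simp
    also have "\<dots> = vinner V y e - (\<Sum>\<theta>\<in>?\<Theta>. 1 * vinner V (eig_proj V E \<theta> y) e)"
      unfolding vinner_diff_left vinner_sum_left ..
    also have "(\<Sum>\<theta>\<in>?\<Theta>. 1 * vinner V (eig_proj V E \<theta> y) e)
        = (\<Sum>\<theta>\<in>?\<Theta>. if \<theta> = \<mu> then vinner V (eig_proj V E \<theta> y) e else 0)"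
      using lap_eigenspaces_orthogonal[OF sg eig_proj_characterization(1)[OF fin] e]
      by (intro sum.cong) auto
    also have "\<dots> = vinner V (eig_proj V E \<mu> y) e"
      using finite_lap_eigenvalues[OF sg] True by (simp add: sum.delta')
    finally have "vinner V res e = vinner V (\<lambda>u. y u - eig_proj V E \<mu> y u) e"
      unfolding vinner_diff_left .
    then show ?thesis using eig_proj_characterization(2)[OF fin e] by simp
  qed
  then have "res = (\<lambda>_. 0)"
    by (intro vec_orthogonal_to_lap_eigenspaces_eq_0[OF sg]) (auto simp: res_def vecs_def)
  then show ?thesis using \<open>u \<in> V\<close> fun_cong[of res _ u] unfolding res_def by simp
qed

lemma vinner_eq_sum_eig_proj:
  assumes sg: "simple_graph V E"
  shows "vinner V x y
    = (\<Sum>\<theta>\<in>{\<theta>. lap_eigenvalue V E \<theta>}. vinner V (eig_proj V E \<theta> x) (eig_proj V E \<theta> y))"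
proof -
  have fin: "finite V" using sg unfolding simple_graph_def by auto
  let ?\<Theta> = "{\<theta>. lap_eigenvalue V E \<theta>}"
  have "vinner V x y = vinner V x (\<lambda>u. \<Sum>\<theta>\<in>?\<Theta>. 1 * eig_proj V E \<theta> y u)"
    unfolding vinner_def using sum_eig_proj[OF sg] by (intro sum.cong) auto
  also have "\<dots> = (\<Sum>\<theta>\<in>?\<Theta>. vinner V (eig_proj V E \<theta> x) (eig_proj V E \<theta> y))"
    unfolding vinner_sum_right by (intro sum.cong refl) (simp add: vinner_eig_proj_right[OF fin, of x])
  finally show ?thesis .
qed

lemma eig_proj_laplacian_power:
  assumes "simple_graph V E"
  shows "eig_proj V E \<theta> ((laplacian V E ^^ k) y) = (\<lambda>u. \<theta> ^ k * eig_proj V E \<theta> y u)"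
  by (induction k) (simp_all add: eig_proj_laplacian[OF assms] mult.assoc)

lemma vinner_laplacian_power_eq_sum_eig_proj:
  assumes "simple_graph V E"
  shows "vinner V ((laplacian V E ^^ k) x) y
    = (\<Sum>\<theta>\<in>{\<theta>. lap_eigenvalue V E \<theta>}. \<theta> ^ k * vinner V (eig_proj V E \<theta> x) (eig_proj V E \<theta> y))"
  unfolding vinner_eq_sum_eig_proj[OF assms, of "(laplacian V E ^^ k) x"]
    eig_proj_laplacian_power[OF assms] vinner_scale_left ..

section \<open>Regular graphs and their Q-graphs\<close>

text \<open>The vertex-edge incidence matrix R of G: incidence is R q for an edge vector q,
  incidence_T is R^T x for a vertex vector x.\<close>

definition incidence :: "'v set \<Rightarrow> ('v \<Rightarrow> 'v \<Rightarrow> bool) \<Rightarrow> ('v set \<Rightarrow> real) \<Rightarrow> 'v \<Rightarrow> real" where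
  "incidence V E q v = (if v \<in> V then (\<Sum>e\<in>{e \<in> edge_set E. v \<in> e}. q e) else 0)"

definition incidence_T :: "('v \<Rightarrow> 'v \<Rightarrow> bool) \<Rightarrow> ('v \<Rightarrow> real) \<Rightarrow> 'v set \<Rightarrow> real" where
  "incidence_T E x e = (if e \<in> edge_set E then (\<Sum>u\<in>e. x u) else 0)"

lemma incidence_scale: "incidence V E (\<lambda>e. a * q e) v = a * incidence V E q v"
  unfolding incidence_def by (simp add: sum_distrib_left)

lemma incidence_T_scale: "incidence_T E (\<lambda>u. a * x u) e = a * incidence_T E x e"
  unfolding incidence_T_def by (simp add: sum_distrib_left)

lemma incidence_zero [simp]: "incidence V E (\<lambda>_. 0) = (\<lambda>_. 0)"
  unfolding incidence_def by auto

lemma incidence_uminus [simp]: "incidence V E (\<lambda>e. - q e) = (\<lambda>v. - incidence V E q v)"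
  unfolding incidence_def by (simp add: sum_negf fun_eq_iff)

definition vertex_part :: "('v + 'v set \<Rightarrow> real) \<Rightarrow> 'v \<Rightarrow> real" where
  "vertex_part z = (\<lambda>v. z (Inl v))"

definition edge_part :: "('v + 'v set \<Rightarrow> real) \<Rightarrow> 'v set \<Rightarrow> real" where
  "edge_part z = (\<lambda>e. z (Inr e))"

locale regular_simple_graph =
  fixes V :: "'v set" and E :: "'v \<Rightarrow> 'v \<Rightarrow> bool" and r :: nat
  assumes regular: "regular_graph V E r"
begin

lemma simple: "simple_graph V E"
  using regular unfolding regular_graph_def by simp

lemma finite_V: "finite V"
  using simple unfolding simple_graph_def by simp

lemma adj_sym: "E u w \<Longrightarrow> E w u"
  using simple unfolding simple_graph_def by blast

lemma adj_in_V: "E u w \<Longrightarrow> u \<in> V \<and> w \<in> V \<and> u \<noteq> w"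
  using simple unfolding simple_graph_def by blast

lemma card_neighbours: "v \<in> V \<Longrightarrow> card {w \<in> V. E v w} = r"
  using regular unfolding regular_graph_def Defs.degree_def by simp

lemma edge_set_cases:
  assumes "e \<in> edge_set E"
  obtains u w where "e = {u, w}" "E u w" "u \<noteq> w" "u \<in> V" "w \<in> V"
  using assms adj_in_V unfolding edge_set_def by blast

lemma edge_set_cases_at:
  assumes "e \<in> edge_set E" "v \<in> e"
  obtains w where "e = {v, w}" "E v w" "w \<noteq> v" "v \<in> V" "w \<in> V"
proof -
  obtain a b where ab: "e = {a, b}" "E a b" "a \<noteq> b" "a \<in> V" "b \<in> V"
    using edge_set_cases[OF assms(1)] by blast
  show ?thesis
  proof (cases "v = a")
    case True then show ?thesis using that ab by auto
  next
    case False then have "v = b" using ab assms(2) by auto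
    then show ?thesis using that[of a] ab adj_sym by (auto simp: insert_commute)
  qed
qed

lemma in_edge_set: "E v w \<Longrightarrow> {v, w} \<in> edge_set E"
  unfolding edge_set_def by blast

lemma edge_subset_V: "e \<in> edge_set E \<Longrightarrow> e \<subseteq> V"
  by (blast elim: edge_set_cases)

lemma finite_edge: "e \<in> edge_set E \<Longrightarrow> finite e"
  by (blast elim: edge_set_cases)

lemma card_edge: "e \<in> edge_set E \<Longrightarrow> card e = 2"
  by (auto elim: edge_set_cases)

lemma finite_edge_set: "finite (edge_set E)"
  using finite_subset[of "edge_set E" "Pow V"] edge_subset_V finite_V by blast

lemma incident_edges_eq: "v \<in> V \<Longrightarrow> {e \<in> edge_set E. v \<in> e} = (\<lambda>w. {v, w}) ` {w \<in> V. E v w}"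
  by (auto intro: in_edge_set elim!: edge_set_cases_at)

lemma inj_on_edges_at: "inj_on (\<lambda>w. {v, w}) {w \<in> V. E v w}"
  by (rule inj_onI) (auto simp: doubleton_eq_iff dest: adj_in_V)

lemma sum_incident_edges:
  "v \<in> V \<Longrightarrow> (\<Sum>e\<in>{e \<in> edge_set E. v \<in> e}. h e) = (\<Sum>w\<in>{w \<in> V. E v w}. h {v, w})"
  unfolding incident_edges_eq by (simp add: sum.reindex[OF inj_on_edges_at])

lemma card_incident_edges: "v \<in> V \<Longrightarrow> card {e \<in> edge_set E. v \<in> e} = r"
  unfolding incident_edges_eq by (simp add: card_image[OF inj_on_edges_at] card_neighbours)

lemma card_edge_Int:
  assumes "e \<in> edge_set E" "f \<in> edge_set E" "e \<noteq> f" "e \<inter> f \<noteq> {}"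
  shows "card (e \<inter> f) = 1"
proof -
  have "card (e \<inter> f) \<le> 2"
    using card_mono[OF finite_edge[OF assms(1)], of "e \<inter> f"] card_edge[OF assms(1)] by simp
  moreover have "card (e \<inter> f) \<noteq> 2"
  proof
    assume "card (e \<inter> f) = 2"
    then have "e \<subseteq> f"
      using card_subset_eq[OF finite_edge[OF assms(1)], of "e \<inter> f"] card_edge[OF assms(1)] by auto
    then show False
      using card_subset_eq[OF finite_edge[OF assms(2)]] card_edge assms(1-3) by metis
  qed
  moreover have "card (e \<inter> f) \<noteq> 0" using assms(4) finite_edge[OF assms(1)] by simp
  ultimately show ?thesis by linarith
qed

lemma laplacian_eq: "v \<in> V \<Longrightarrow> laplacian V E x v = real r * x v - (\<Sum>w\<in>{w \<in> V. E v w}. x w)"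
  unfolding laplacian_def Defs.degree_def by (simp add: card_neighbours)

lemma incidence_T_edge: "E v w \<Longrightarrow> incidence_T E x {v, w} = x v + x w"
  unfolding incidence_T_def using in_edge_set adj_in_V by simp

lemma incidence_T_cong:
  "(\<And>u. u \<in> V \<Longrightarrow> x u = y u) \<Longrightarrow> incidence_T E x e = incidence_T E y e"
  unfolding incidence_T_def using edge_subset_V by (auto intro!: sum.cong)

lemma incidence_incidence_T:
  "v \<in> V \<Longrightarrow> incidence V E (incidence_T E x) v = 2 * real r * x v - laplacian V E x v"
proof -
  assume v: "v \<in> V"
  have "incidence V E (incidence_T E x) v = (\<Sum>w\<in>{w \<in> V. E v w}. x v + x w)"
    unfolding incidence_def using v by (simp add: sum_incident_edges incidence_T_edge)
  also have "\<dots> = real r * x v + (\<Sum>w\<in>{w \<in> V. E v w}. x w)"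
    using v by (simp add: sum.distrib card_neighbours)
  finally show ?thesis using laplacian_eq[OF v] by simp
qed

lemma vinner_incidence: "vinner V x (incidence V E q) = vinner (edge_set E) (incidence_T E x) q"
proof -
  have "vinner V x (incidence V E q) = (\<Sum>v\<in>V. \<Sum>e\<in>edge_set E. if v \<in> e then x v * q e else 0)"
    unfolding vinner_def incidence_def
    by (intro sum.cong refl) (simp add: sum_distrib_left sum.inter_filter[OF finite_edge_set, symmetric]
        if_distrib cong: if_cong)
  also have "\<dots> = (\<Sum>e\<in>edge_set E. \<Sum>v\<in>V. if v \<in> e then x v * q e else 0)" by (rule sum.swap)
  also have "\<dots> = vinner (edge_set E) (incidence_T E x) q"
    unfolding vinner_def incidence_T_def
  proof (intro sum.cong refl)
    fix e assume e: "e \<in> edge_set E"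
    have "(\<Sum>v\<in>V. if v \<in> e then x v * q e else 0) = (\<Sum>v\<in>{v\<in>V. v \<in> e}. x v * q e)"
      by (simp add: sum.inter_filter[OF finite_V])
    also have "{v\<in>V. v \<in> e} = e" using edge_subset_V[OF e] by blast
    finally show "(\<Sum>v\<in>V. if v \<in> e then x v * q e else 0) = (if e \<in> edge_set E then sum x e else 0) * q e"
      using e by (simp add: sum_distrib_right)
  qed
  finally show ?thesis .
qed

lemma incidence_T_incidence:
  assumes e: "e \<in> edge_set E"
  shows "incidence_T E (incidence V E q) e
    = 2 * q e + (\<Sum>f\<in>{f \<in> edge_set E. f \<noteq> e \<and> e \<inter> f \<noteq> {}}. q f)"
proof -
  have "incidence_T E (incidence V E q) e = (\<Sum>u\<in>e. incidence V E q u)"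
    using e by (simp add: incidence_T_def)
  also have "\<dots> = (\<Sum>u\<in>e. \<Sum>f\<in>edge_set E. if u \<in> f then q f else 0)"
    using edge_subset_V[OF e] unfolding incidence_def
    by (intro sum.cong) (auto simp: sum.inter_filter[OF finite_edge_set])
  also have "\<dots> = (\<Sum>f\<in>edge_set E. real (card (e \<inter> f)) * q f)"
    by (subst sum.swap) (simp add: sum.inter_restrict[OF finite_edge[OF e], symmetric])
  also have "\<dots> = (\<Sum>f\<in>edge_set E. (if f = e then 2 * q f else 0)
      + (if f \<noteq> e \<and> e \<inter> f \<noteq> {} then q f else 0))"
  proof (intro sum.cong refl)
    fix f assume f: "f \<in> edge_set E"
    show "real (card (e \<inter> f)) * q f
        = (if f = e then 2 * q f else 0) + (if f \<noteq> e \<and> e \<inter> f \<noteq> {} then q f else 0)"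
      using card_edge_Int[OF e f] card_edge[OF e] by (cases "f = e"; cases "e \<inter> f = {}") auto
  qed
  also have "\<dots> = 2 * q e + (\<Sum>f\<in>{f \<in> edge_set E. f \<noteq> e \<and> e \<inter> f \<noteq> {}}. q f)"
    using e by (simp add: sum.distrib sum.delta[OF finite_edge_set] sum.inter_filter[OF finite_edge_set])
  finally show ?thesis .
qed

lemma card_adjacent_edges:
  assumes e: "e \<in> edge_set E"
  shows "real (card {f \<in> edge_set E. f \<noteq> e \<and> e \<inter> f \<noteq> {}}) = 2 * real r - 2"
proof -
  have "incidence_T E (incidence V E (\<lambda>_. 1)) e = (\<Sum>u\<in>e. incidence V E (\<lambda>_. 1) u)"
    using e by (simp add: incidence_T_def)
  also have "\<dots> = (\<Sum>u\<in>e. real r)"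
    using edge_subset_V[OF e] card_incident_edges unfolding incidence_def by (intro sum.cong) auto
  also have "\<dots> = 2 * real r" using card_edge[OF e] by simp
  finally show ?thesis using incidence_T_incidence[OF e, of "\<lambda>_. 1"] by simp
qed

lemma Inl_in_Q_vertices [simp]: "Inl v \<in> Q_vertices V E \<longleftrightarrow> v \<in> V"
  unfolding Q_vertices_def by auto

lemma Inr_in_Q_vertices [simp]: "Inr e \<in> Q_vertices V E \<longleftrightarrow> e \<in> edge_set E"
  unfolding Q_vertices_def by auto

lemma finite_Q_vertices: "finite (Q_vertices V E)"
  unfolding Q_vertices_def using finite_V finite_edge_set by simp

lemma vinner_Q_vertices:
  "vinner (Q_vertices V E) z w
    = vinner V (vertex_part z) (vertex_part w) + vinner (edge_set E) (edge_part z) (edge_part w)"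
proof -
  have "vinner (Q_vertices V E) z w = (\<Sum>s\<in>Inl ` V. z s * w s) + (\<Sum>s\<in>Inr ` edge_set E. z s * w s)"
    unfolding vinner_def Q_vertices_def using finite_V finite_edge_set
    by (intro sum.union_disjoint) auto
  then show ?thesis unfolding vinner_def vertex_part_def edge_part_def by (simp add: sum.reindex)
qed

lemma Q_neighbours_Inl:
  "v \<in> V \<Longrightarrow> {w \<in> Q_vertices V E. Q_adj E (Inl v) w} = Inr ` {e \<in> edge_set E. v \<in> e}"
proof (intro set_eqI)
  fix x :: "'v + 'v set"
  show "x \<in> {w \<in> Q_vertices V E. Q_adj E (Inl v) w} \<longleftrightarrow> x \<in> Inr ` {e \<in> edge_set E. v \<in> e}"
    by (cases x) (auto simp: Q_adj_def)
qed

lemma Q_neighbours_Inr: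
  "e \<in> edge_set E \<Longrightarrow> {w \<in> Q_vertices V E. Q_adj E (Inr e) w}
    = Inl ` e \<union> Inr ` {f \<in> edge_set E. f \<noteq> e \<and> e \<inter> f \<noteq> {}}"
proof (intro set_eqI)
  fix x :: "'v + 'v set"
  assume "e \<in> edge_set E"
  then show "x \<in> {w \<in> Q_vertices V E. Q_adj E (Inr e) w}
      \<longleftrightarrow> x \<in> Inl ` e \<union> Inr ` {f \<in> edge_set E. f \<noteq> e \<and> e \<inter> f \<noteq> {}}"
    using edge_subset_V by (cases x) (auto simp: Q_adj_def)
qed

lemma Q_laplacian_Inl:
  assumes "v \<in> V"
  shows "laplacian (Q_vertices V E) (Q_adj E) z (Inl v)
    = real r * z (Inl v) - incidence V E (edge_part z) v"
proof -
  have "Defs.degree (Q_vertices V E) (Q_adj E) (Inl v) = r"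
    unfolding Defs.degree_def Q_neighbours_Inl[OF assms]
    by (simp add: card_image card_incident_edges[OF assms])
  moreover have "(\<Sum>w\<in>{w \<in> Q_vertices V E. Q_adj E (Inl v) w}. z w) = incidence V E (edge_part z) v"
    unfolding Q_neighbours_Inl[OF assms] incidence_def edge_part_def using assms
    by (simp add: sum.reindex)
  ultimately show ?thesis unfolding laplacian_def using assms by simp
qed

lemma Q_laplacian_Inr:
  assumes e: "e \<in> edge_set E"
  shows "laplacian (Q_vertices V E) (Q_adj E) z (Inr e) = (2 * real r + 2) * z (Inr e)
    - incidence_T E (vertex_part z) e - incidence_T E (incidence V E (edge_part z)) e"
proof -
  let ?F = "{f \<in> edge_set E. f \<noteq> e \<and> e \<inter> f \<noteq> {}}"
  have disjoint: "Inl ` e \<inter> Inr ` ?F = {}" by auto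
  have "finite ?F" using finite_edge_set by simp
  have "real (Defs.degree (Q_vertices V E) (Q_adj E) (Inr e)) = real (card e + card ?F)"
    unfolding Defs.degree_def Q_neighbours_Inr[OF e]
    using card_Un_disjoint[OF _ _ disjoint] finite_edge[OF e] \<open>finite ?F\<close> by (simp add: card_image)
  also have "\<dots> = 2 * real r" using card_edge[OF e] card_adjacent_edges[OF e] by simp
  finally have "real (Defs.degree (Q_vertices V E) (Q_adj E) (Inr e)) = 2 * real r" .
  moreover have "(\<Sum>w\<in>{w \<in> Q_vertices V E. Q_adj E (Inr e) w}. z w)
      = (\<Sum>w\<in>Inl ` e. z w) + (\<Sum>w\<in>Inr ` ?F. z w)"
    unfolding Q_neighbours_Inr[OF e] using finite_edge[OF e] \<open>finite ?F\<close>
    by (intro sum.union_disjoint) auto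
  moreover have "\<dots> = incidence_T E (vertex_part z) e
      + (incidence_T E (incidence V E (edge_part z)) e - 2 * z (Inr e))"
    using e incidence_T_incidence[OF e, of "edge_part z"]
    by (simp add: sum.reindex incidence_T_def vertex_part_def edge_part_def)
  ultimately show ?thesis unfolding laplacian_def using e by (simp add: algebra_simps)
qed

end

section \<open>Eigenvectors of the Q-graph\<close>

definition lift :: "('v \<Rightarrow> 'v \<Rightarrow> bool) \<Rightarrow> real \<Rightarrow> ('v \<Rightarrow> real) \<Rightarrow> 'v + 'v set \<Rightarrow> real" where
  "lift E c x = case_sum x (\<lambda>e. c * incidence_T E x e)"

lemma lift_Inl [simp]: "lift E c x (Inl v) = x v"
  unfolding lift_def by simp

lemma lift_Inr [simp]: "lift E c x (Inr e) = c * incidence_T E x e"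
  unfolding lift_def by simp

lemma lift_eq_scaled_iff: "lift E c x = (\<lambda>u. s * lift E c y u) \<longleftrightarrow> x = (\<lambda>u. s * y u)"
proof
  assume "lift E c x = (\<lambda>u. s * lift E c y u)"
  then show "x = (\<lambda>u. s * y u)" by (metis lift_Inl)
next
  assume "x = (\<lambda>u. s * y u)"
  then show "lift E c x = (\<lambda>u. s * lift E c y u)"
    by (intro ext) (simp add: lift_def incidence_T_scale split: sum.split)
qed

text \<open>The eigenvalues l \<noteq> 2 r + 2 of Q(G) come from the eigenvalues \<theta> of G as the roots
  of l^2 - (r + 2 + \<theta>) l + (r + 1) \<theta>, i.e. as theta_plus r \<theta> and theta_minus r \<theta>;
  the corresponding eigenvectors are lift E (lift_coeff r l) x with L x = \<theta> x.\<close>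

definition lifted_eigenvalue :: "nat \<Rightarrow> real \<Rightarrow> real \<Rightarrow> bool" where
  "lifted_eigenvalue r \<theta> l \<longleftrightarrow>
     l\<^sup>2 - (real r + 2 + \<theta>) * l + (real r + 1) * \<theta> = 0 \<and> l \<noteq> 2 * real r + 2"

definition lift_coeff :: "nat \<Rightarrow> real \<Rightarrow> real" where
  "lift_coeff r l = (real r + 1 - l) / (2 * real r + 2 - l)"

lemma lift_coeff_identities:
  assumes "lifted_eigenvalue r \<theta> l"
  shows "lift_coeff r l \<noteq> 0"
    and "lift_coeff r l * (2 * real r - \<theta>) = real r - l"
    and "lift_coeff r l * (2 + \<theta> - l) = 1"
proof -
  have root: "l\<^sup>2 - (real r + 2 + \<theta>) * l + (real r + 1) * \<theta> = 0"
    and den: "2 * real r + 2 - l \<noteq> 0"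
    using assms unfolding lifted_eigenvalue_def by auto
  have "real r + 1 - l \<noteq> 0"
  proof
    assume "real r + 1 - l = 0"
    then have "l = real r + 1" by simp
    then have "l\<^sup>2 - (real r + 2 + \<theta>) * l + (real r + 1) * \<theta> = - (real r + 1)"
      by (simp add: power2_eq_square algebra_simps)
    then show False using root by simp
  qed
  then show "lift_coeff r l \<noteq> 0" unfolding lift_coeff_def using den by simp
  have "(real r + 1 - l) * (2 * real r - \<theta>) = (real r - l) * (2 * real r + 2 - l)"
    using root by (simp add: power2_eq_square algebra_simps)
  then show "lift_coeff r l * (2 * real r - \<theta>) = real r - l"
    unfolding lift_coeff_def using den by (simp add: field_simps)
  have "(real r + 1 - l) * (2 + \<theta> - l) = 2 * real r + 2 - l"
    using root by (simp add: power2_eq_square algebra_simps)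
  then show "lift_coeff r l * (2 + \<theta> - l) = 1"
    unfolding lift_coeff_def using den by (simp add: field_simps)
qed

definition reduced_proj ::
  "'v set \<Rightarrow> ('v \<Rightarrow> 'v \<Rightarrow> bool) \<Rightarrow> nat \<Rightarrow> real \<Rightarrow> real \<Rightarrow> ('v + 'v set \<Rightarrow> real) \<Rightarrow> 'v \<Rightarrow> real"
where
  "reduced_proj V E r \<theta> l z
     = eig_proj V E \<theta> (\<lambda>v. vertex_part z v + lift_coeff r l * incidence V E (edge_part z) v)"

context regular_simple_graph
begin

lemma incidence_incidence_T_eigenvector:
  "x \<in> lap_eigenspace V E \<theta> \<Longrightarrow> v \<in> V \<Longrightarrow>
    incidence V E (incidence_T E x) v = (2 * real r - \<theta>) * x v"
  using incidence_incidence_T[of v x] lap_eigenspace_laplacian[of x V E \<theta>]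
  by (simp add: algebra_simps)

lemma incidence_T_incidence_incidence_T_eigenvector:
  assumes "x \<in> lap_eigenspace V E \<theta>"
  shows "incidence_T E (incidence V E (incidence_T E x)) e = (2 * real r - \<theta>) * incidence_T E x e"
  using incidence_T_cong[of "incidence V E (incidence_T E x)" "\<lambda>u. (2 * real r - \<theta>) * x u" e]
    incidence_incidence_T_eigenvector[OF assms]
  by (simp add: incidence_T_scale)

lemma vinner_incidence_incidence_T_eigenvector:
  assumes "x \<in> lap_eigenspace V E \<theta>"
  shows "vinner (edge_set E) (incidence_T E y) (incidence_T E x) = (2 * real r - \<theta>) * vinner V y x"
proof -
  have "vinner (edge_set E) (incidence_T E y) (incidence_T E x) = vinner V y (incidence V E (incidence_T E x))"
    by (rule vinner_incidence[symmetric])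
  also have "\<dots> = vinner V y (\<lambda>u. (2 * real r - \<theta>) * x u)"
    unfolding vinner_def using incidence_incidence_T_eigenvector[OF assms] by (intro sum.cong) auto
  finally show ?thesis by (simp add: vinner_scale_right)
qed

lemma lap_eigenvalue_le:
  assumes "lap_eigenvalue V E \<theta>"
  shows "\<theta> \<le> 2 * real r"
proof -
  obtain x where x: "x \<in> lap_eigenspace V E \<theta>" "x \<noteq> (\<lambda>_. 0)"
    using assms unfolding lap_eigenvalue_def by blast
  have "(2 * real r - \<theta>) * vinner V x x = vinner (edge_set E) (incidence_T E x) (incidence_T E x)"
    using vinner_incidence_incidence_T_eigenvector[OF x(1), of x] by simp
  moreover have "0 < vinner V x x"
    using vinner_self_pos[OF finite_V lap_eigenspace_vecs[OF x(1)] x(2)] .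
  ultimately show ?thesis
    using vinner_self_nonneg[of "edge_set E" "incidence_T E x"] by (smt (verit) mult_neg_pos)
qed

lemma lift_in_vecs: "x \<in> vecs V \<Longrightarrow> lift E c x \<in> vecs (Q_vertices V E)"
  unfolding vecs_def by (auto simp: lift_def incidence_T_def split: sum.split)

lemma lift_in_Q_eigenspace:
  assumes l: "lifted_eigenvalue r \<theta> l" and x: "x \<in> lap_eigenspace V E \<theta>"
  shows "lift E (lift_coeff r l) x \<in> lap_eigenspace (Q_vertices V E) (Q_adj E) l"
proof -
  let ?c = "lift_coeff r l" and ?QL = "laplacian (Q_vertices V E) (Q_adj E)"
  note coeff = lift_coeff_identities[OF l]
  have edge_part: "edge_part (lift E ?c x) = (\<lambda>e. ?c * incidence_T E x e)"
    unfolding edge_part_def by simp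
  have "?QL (lift E ?c x) s = l * lift E ?c x s" if "s \<in> Q_vertices V E" for s
  proof (cases s)
    case (Inl v)
    then have "v \<in> V" using that by simp
    have "incidence V E (edge_part (lift E ?c x)) v = (?c * (2 * real r - \<theta>)) * x v"
      unfolding edge_part incidence_scale incidence_incidence_T_eigenvector[OF x \<open>v \<in> V\<close>] by simp
    then show ?thesis
      unfolding Inl Q_laplacian_Inl[OF \<open>v \<in> V\<close>] coeff(2) by (simp add: algebra_simps)
  next
    case (Inr e)
    then have "e \<in> edge_set E" using that by simp
    have "incidence_T E (incidence V E (edge_part (lift E ?c x))) e
        = ?c * ((2 * real r - \<theta>) * incidence_T E x e)"
      unfolding edge_part incidence_scale incidence_T_scale
        incidence_T_incidence_incidence_T_eigenvector[OF x] ..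
    moreover have "vertex_part (lift E ?c x) = x" unfolding vertex_part_def by simp
    ultimately have "?QL (lift E ?c x) (Inr e)
        = ((2 * real r + 2) * ?c - 1 - ?c * (2 * real r - \<theta>)) * incidence_T E x e"
      unfolding Q_laplacian_Inr[OF \<open>e \<in> edge_set E\<close>] by (simp add: algebra_simps)
    also have "(2 * real r + 2) * ?c - 1 - ?c * (2 * real r - \<theta>) = l * ?c"
      using coeff(3) by (simp add: algebra_simps)
    finally show ?thesis unfolding Inr by simp
  qed
  then have "?QL (lift E ?c x) = (\<lambda>s. l * lift E ?c x s)"
    using lift_in_vecs[OF lap_eigenspace_vecs[OF x], of ?c]
    by (intro vecs_eqI[OF laplacian_in_vecs]) (auto simp: vecs_def)
  then show ?thesis
    unfolding lap_eigenspace_def using lift_in_vecs[OF lap_eigenspace_vecs[OF x]] by simp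
qed

lemma Q_eigenspace_edge_part:
  assumes "lifted_eigenvalue r \<theta> l" and z: "z \<in> lap_eigenspace (Q_vertices V E) (Q_adj E) l"
  shows "incidence V E (edge_part z) v = (real r - l) * vertex_part z v" (is ?vertex)
    and "edge_part z = (\<lambda>e. lift_coeff r l * incidence_T E (vertex_part z) e)" (is ?edge)
proof -
  have eq: "laplacian (Q_vertices V E) (Q_adj E) z s = l * z s" for s
    using lap_eigenspace_laplacian[OF z] by simp
  have zero: "z s = 0" if "s \<notin> Q_vertices V E" for s
    using lap_eigenspace_vecs[OF z] that unfolding vecs_def by blast
  have vertex: "incidence V E (edge_part z) v = (real r - l) * vertex_part z v" for v
  proof (cases "v \<in> V")
    case True
    then show ?thesis
      using eq[of "Inl v"] unfolding Q_laplacian_Inl[OF True] vertex_part_def by (simp add: algebra_simps)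
  qed (use zero in \<open>simp add: incidence_def vertex_part_def\<close>)
  then show ?vertex .
  show ?edge
  proof
    fix e show "edge_part z e = lift_coeff r l * incidence_T E (vertex_part z) e"
    proof (cases "e \<in> edge_set E")
      case True
      have "incidence V E (edge_part z) = (\<lambda>v. (real r - l) * vertex_part z v)"
        using vertex by (rule ext)
      then have "incidence_T E (incidence V E (edge_part z)) e
          = (real r - l) * incidence_T E (vertex_part z) e"
        by (simp add: incidence_T_scale)
      then have "(2 * real r + 2 - l) * edge_part z e = (real r + 1 - l) * incidence_T E (vertex_part z) e"
        using eq[of "Inr e"] unfolding Q_laplacian_Inr[OF True] edge_part_def
        by (simp add: algebra_simps)
      then show ?thesis
        using assms(1) unfolding lift_coeff_def lifted_eigenvalue_def by (simp add: field_simps)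
    qed (use zero in \<open>simp add: incidence_T_def edge_part_def\<close>)
  qed
qed

lemma Q_eigenspace_eq_lift:
  assumes l: "lifted_eigenvalue r \<theta> l" and z: "z \<in> lap_eigenspace (Q_vertices V E) (Q_adj E) l"
  shows "vertex_part z \<in> lap_eigenspace V E \<theta>" and "z = lift E (lift_coeff r l) (vertex_part z)"
proof -
  let ?c = "lift_coeff r l" and ?p = "vertex_part z"
  note coeff = lift_coeff_identities[OF l]
  have "?c * laplacian V E ?p v = ?c * (\<theta> * ?p v)" if "v \<in> V" for v
  proof -
    have "(real r - l) * ?p v = incidence V E (edge_part z) v"
      using Q_eigenspace_edge_part(1)[OF l z] by simp
    also have "\<dots> = ?c * incidence V E (incidence_T E ?p) v"
      unfolding Q_eigenspace_edge_part(2)[OF l z] by (rule incidence_scale)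
    finally have "(real r - l) * ?p v = ?c * incidence V E (incidence_T E ?p) v" .
    then show ?thesis
      unfolding incidence_incidence_T[OF that] coeff(2)[symmetric] by (simp add: algebra_simps)
  qed
  then have "laplacian V E ?p = (\<lambda>v. \<theta> * ?p v)"
    using coeff(1) lap_eigenspace_vecs[OF z]
    by (intro vecs_eqI[OF laplacian_in_vecs]) (auto simp: vecs_def vertex_part_def)
  then show "?p \<in> lap_eigenspace V E \<theta>"
    using lap_eigenspace_vecs[OF z] unfolding lap_eigenspace_def vecs_def vertex_part_def by simp
  show "z = lift E ?c ?p"
    using Q_eigenspace_edge_part(2)[OF l z]
    by (intro ext) (auto simp: lift_def vertex_part_def edge_part_def fun_eq_iff split: sum.split)
qed

lemma Q_eigenspace_iff:
  assumes "lifted_eigenvalue r \<theta> l"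
  shows "z \<in> lap_eigenspace (Q_vertices V E) (Q_adj E) l
    \<longleftrightarrow> (\<exists>x\<in>lap_eigenspace V E \<theta>. z = lift E (lift_coeff r l) x)"
  using Q_eigenspace_eq_lift[OF assms] lift_in_Q_eigenspace[OF assms] by blast

lemma lap_eigenvalue_Q_lifted:
  assumes "lifted_eigenvalue r \<theta> l" "lap_eigenvalue V E \<theta>"
  shows "lap_eigenvalue (Q_vertices V E) (Q_adj E) l"
proof -
  obtain x where "x \<in> lap_eigenspace V E \<theta>" "x \<noteq> (\<lambda>_. 0)"
    using assms(2) unfolding lap_eigenvalue_def by blast
  moreover have "lift E (lift_coeff r l) x \<noteq> (\<lambda>_. 0)" if "x \<noteq> (\<lambda>_. 0)"
    using that lift_Inl by (metis ext)
  ultimately show ?thesis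
    using lift_in_Q_eigenspace[OF assms(1)] unfolding lap_eigenvalue_def by blast
qed

lemma vinner_lift_right:
  "vinner (Q_vertices V E) z (lift E c x)
    = vinner V (\<lambda>v. vertex_part z v + c * incidence V E (edge_part z) v) x"
proof -
  have "vinner (edge_set E) (edge_part z) (edge_part (lift E c x))
      = c * vinner V (incidence V E (edge_part z)) x"
    using vinner_incidence[of x "edge_part z"]
    by (simp add: edge_part_def vinner_scale_right vinner_commute)
  moreover have "vertex_part (lift E c x) = x" unfolding vertex_part_def by simp
  ultimately show ?thesis
    unfolding vinner_Q_vertices by (simp add: vinner_add_left vinner_scale_left)
qed

lemma vinner_lift_lift:
  assumes "x \<in> lap_eigenspace V E \<theta>"
  shows "vinner (Q_vertices V E) (lift E c y) (lift E c x) = (1 + c\<^sup>2 * (2 * real r - \<theta>)) * vinner V y x"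
proof -
  have "vinner (edge_set E) (edge_part (lift E c y)) (edge_part (lift E c x))
      = c\<^sup>2 * vinner (edge_set E) (incidence_T E y) (incidence_T E x)"
    unfolding edge_part_def lift_Inr vinner_scale_left vinner_scale_right by (simp add: power2_eq_square)
  moreover have "vertex_part (lift E c y) = y" "vertex_part (lift E c x) = x"
    unfolding vertex_part_def by simp_all
  ultimately show ?thesis
    unfolding vinner_Q_vertices vinner_incidence_incidence_T_eigenvector[OF assms]
    by (simp add: algebra_simps)
qed

lemma lift_norm_factor_pos: "\<theta> \<le> 2 * real r \<Longrightarrow> 0 < 1 + c\<^sup>2 * (2 * real r - \<theta>)"
  by (smt (verit) mult_nonneg_nonneg zero_le_power2)

lemma eig_proj_Q_eq_lift:
  assumes l: "lifted_eigenvalue r \<theta> l" and le: "\<theta> \<le> 2 * real r"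
  defines "c \<equiv> lift_coeff r l"
  shows "eig_proj (Q_vertices V E) (Q_adj E) l z
    = lift E c (\<lambda>u. (1 / (1 + c\<^sup>2 * (2 * real r - \<theta>))) * reduced_proj V E r \<theta> l z u)"
proof (rule eig_proj_eqI[OF finite_Q_vertices])
  let ?d = "1 + c\<^sup>2 * (2 * real r - \<theta>)" and ?X = "reduced_proj V E r \<theta> l z"
  have X: "?X \<in> lap_eigenspace V E \<theta>"
    unfolding reduced_proj_def by (rule eig_proj_characterization(1)[OF finite_V])
  then show "lift E c (\<lambda>u. (1 / ?d) * ?X u) \<in> lap_eigenspace (Q_vertices V E) (Q_adj E) l"
    unfolding c_def by (intro lift_in_Q_eigenspace[OF l] lap_eigenspace_scale)
  fix w assume "w \<in> lap_eigenspace (Q_vertices V E) (Q_adj E) l"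
  then obtain x where x: "x \<in> lap_eigenspace V E \<theta>" and w: "w = lift E c x"
    using Q_eigenspace_iff[OF l] unfolding c_def by blast
  have "vinner (Q_vertices V E) z w = vinner V ?X x"
    using eig_proj_characterization(2)[OF finite_V x]
    unfolding w vinner_lift_right reduced_proj_def c_def vinner_diff_left by simp
  moreover have "vinner (Q_vertices V E) (lift E c (\<lambda>u. (1 / ?d) * ?X u)) w = vinner V ?X x"
    unfolding w vinner_lift_lift[OF x] vinner_scale_left using lift_norm_factor_pos[OF le, of c] by simp
  ultimately show "vinner (Q_vertices V E) (\<lambda>u. z u - lift E c (\<lambda>u. (1 / ?d) * ?X u) u) w = 0"
    unfolding vinner_diff_left by simp
qed

lemma eig_proj_Q_eq_scaled_iff:
  assumes "lifted_eigenvalue r \<theta> l" "\<theta> \<le> 2 * real r"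
  shows "eig_proj (Q_vertices V E) (Q_adj E) l z = (\<lambda>u. s * eig_proj (Q_vertices V E) (Q_adj E) l w u)
    \<longleftrightarrow> reduced_proj V E r \<theta> l z = (\<lambda>u. s * reduced_proj V E r \<theta> l w u)"
proof -
  have "1 + (lift_coeff r l)\<^sup>2 * (2 * real r - \<theta>) \<noteq> 0"
    using lift_norm_factor_pos[OF assms(2)] by (metis less_irrefl)
  then show ?thesis
    unfolding eig_proj_Q_eq_lift[OF assms] lift_eq_scaled_iff by (simp add: fun_eq_iff)
qed

lemma vinner_self_eig_proj_Q:
  assumes "lifted_eigenvalue r \<theta> l" "\<theta> \<le> 2 * real r"
  defines "d \<equiv> 1 + (lift_coeff r l)\<^sup>2 * (2 * real r - \<theta>)"
  shows "vinner (Q_vertices V E) (eig_proj (Q_vertices V E) (Q_adj E) l z)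
      (eig_proj (Q_vertices V E) (Q_adj E) l z)
    = vinner V (reduced_proj V E r \<theta> l z) (reduced_proj V E r \<theta> l z) / d"
proof -
  have X: "(\<lambda>u. (1 / d) * reduced_proj V E r \<theta> l z u) \<in> lap_eigenspace V E \<theta>"
    unfolding reduced_proj_def by (intro lap_eigenspace_scale eig_proj_characterization(1)[OF finite_V])
  have "d > 0" unfolding d_def by (rule lift_norm_factor_pos[OF assms(2)])
  then show ?thesis
    unfolding eig_proj_Q_eq_lift[OF assms(1,2)] d_def[symmetric] vinner_lift_lift[OF X]
      vinner_scale_left vinner_scale_right
    by (simp add: field_simps)
qed

lemma vinner_self_reduced_proj:
  fixes z :: "'v + 'v set \<Rightarrow> real" and \<theta> l :: real
  defines "P \<equiv> eig_proj V E \<theta> (vertex_part z)" and "Q \<equiv> eig_proj V E \<theta> (incidence V E (edge_part z))"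
  shows "vinner V (reduced_proj V E r \<theta> l z) (reduced_proj V E r \<theta> l z)
    = vinner V P P + 2 * lift_coeff r l * vinner V P Q + (lift_coeff r l)\<^sup>2 * vinner V Q Q"
  unfolding reduced_proj_def eig_proj_add_scaled[OF finite_V] vinner_self_add_scaled P_def Q_def
    vertex_part_def ..

lemma incidence_T_2r_eigenvector:
  assumes "x \<in> lap_eigenspace V E (2 * real r)" "e \<in> edge_set E"
  shows "incidence_T E x e = 0"
proof -
  have "vinner (edge_set E) (incidence_T E x) (incidence_T E x) = 0"
    using vinner_incidence_incidence_T_eigenvector[OF assms(1)] by simp
  then show ?thesis using vinner_self_eq_0_iff[OF finite_edge_set] assms(2) by blast
qed

lemma eig_proj_2r_incidence: "eig_proj V E (2 * real r) (incidence V E q) = (\<lambda>_. 0)"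
proof (rule eig_proj_eqI[OF finite_V zero_in_lap_eigenspace])
  fix w assume w: "w \<in> lap_eigenspace V E (2 * real r)"
  have "vinner V w (incidence V E q) = 0"
    unfolding vinner_incidence by (simp add: vinner_def incidence_T_2r_eigenvector[OF w])
  then show "vinner V (\<lambda>u. incidence V E q u - 0) w = 0" by (simp add: vinner_commute)
qed

end

lemma theta_plus_minus_lifted:
  assumes "\<theta> \<noteq> 2 * real r"
  shows "lifted_eigenvalue r \<theta> (theta_plus r \<theta>)" and "lifted_eigenvalue r \<theta> (theta_minus r \<theta>)"
proof -
  define D where "D = (real r + 2 - \<theta>)\<^sup>2 + 4 * \<theta>"
  have "D = (\<theta> - real r)\<^sup>2 + 4 * real r + 4"
    unfolding D_def by (simp add: power2_eq_square algebra_simps)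
  then have "D > 0" by (smt (verit) of_nat_0_le_iff zero_le_power2)
  then have sq: "sqrt D * sqrt D = D" by simp
  have D_alt: "D = (\<theta> + 2 + real r)\<^sup>2 - 4 * ((real r + 1) * \<theta>)"
    unfolding D_def by (simp add: power2_eq_square algebra_simps)
  have not_2r2: "l \<noteq> 2 * real r + 2" if "l\<^sup>2 - (real r + 2 + \<theta>) * l + (real r + 1) * \<theta> = 0" for l
  proof
    assume "l = 2 * real r + 2"
    then have "l\<^sup>2 - (real r + 2 + \<theta>) * l + (real r + 1) * \<theta> = (real r + 1) * (2 * real r - \<theta>)"
      by (simp add: power2_eq_square algebra_simps)
    then show False using that assms by simp
  qed
  have "(theta_plus r \<theta>)\<^sup>2 - (real r + 2 + \<theta>) * theta_plus r \<theta> + (real r + 1) * \<theta> = 0"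
    unfolding theta_plus_def D_def[symmetric] using sq D_alt
    by (simp add: power2_eq_square field_simps, (simp add: algebra_simps)?)
  then show "lifted_eigenvalue r \<theta> (theta_plus r \<theta>)"
    unfolding lifted_eigenvalue_def using not_2r2 by blast
  have "(theta_minus r \<theta>)\<^sup>2 - (real r + 2 + \<theta>) * theta_minus r \<theta> + (real r + 1) * \<theta> = 0"
    unfolding theta_minus_def D_def[symmetric] using sq D_alt
    by (simp add: power2_eq_square field_simps, (simp add: algebra_simps)?)
  then show "lifted_eigenvalue r \<theta> (theta_minus r \<theta>)"
    unfolding lifted_eigenvalue_def using not_2r2 by blast
qed

lemma theta_plus_ne_theta_minus: "theta_plus r \<theta> \<noteq> theta_minus r \<theta>"
proof -
  have "(real r + 2 - \<theta>)\<^sup>2 + 4 * \<theta> = (\<theta> - real r)\<^sup>2 + 4 * real r + 4"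
    by (simp add: power2_eq_square algebra_simps)
  then have "sqrt ((real r + 2 - \<theta>)\<^sup>2 + 4 * \<theta>) > 0"
    by (smt (verit) of_nat_0_le_iff real_sqrt_gt_zero zero_le_power2)
  then show ?thesis unfolding theta_plus_def theta_minus_def by simp
qed

lemma lift_coeff_inj:
  assumes "l1 \<noteq> 2 * real r + 2" "l2 \<noteq> 2 * real r + 2" "l1 \<noteq> l2"
  shows "lift_coeff r l1 \<noteq> lift_coeff r l2"
proof
  assume "lift_coeff r l1 = lift_coeff r l2"
  then have "(real r + 1 - l1) * (2 * real r + 2 - l2) = (real r + 1 - l2) * (2 * real r + 2 - l1)"
    unfolding lift_coeff_def using assms(1,2) by (simp add: field_simps)
  then have "(real r + 1) * (l2 - l1) = 0" by (simp add: algebra_simps)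
  then show False using assms(3) by simp
qed

lemma lift_coeff_quadratic:
  assumes "lifted_eigenvalue r \<theta> l"
  shows "(2 * real r - \<theta>) * (lift_coeff r l)\<^sup>2 - (real r - 2 - \<theta>) * lift_coeff r l - 1 = 0"
proof -
  let ?c = "lift_coeff r l"
  have "(2 * real r - \<theta>) * ?c\<^sup>2 = ?c * (?c * (2 * real r - \<theta>))" by (simp add: power2_eq_square)
  also have "\<dots> = ?c * (real r - l)" using lift_coeff_identities(2)[OF assms] by simp
  also have "\<dots> = (real r - 2 - \<theta>) * ?c + 1"
    using lift_coeff_identities(3)[OF assms] by (simp add: algebra_simps)
  finally show ?thesis by simp
qed

text \<open>By Vieta, c1 + c2 = m / k and c1 c2 = -1 / k.\<close>

lemma quadratic_vanishing_at_two_roots: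
  fixes k m c1 c2 x y w :: real
  assumes "c1 \<noteq> c2" "k \<noteq> 0" "k * c1\<^sup>2 - m * c1 - 1 = 0" "k * c2\<^sup>2 - m * c2 - 1 = 0"
    "x + 2 * c1 * y + c1\<^sup>2 * w = 0" "x + 2 * c2 * y + c2\<^sup>2 * w = 0"
  shows "2 * y = m * x"
proof -
  have "(c1 - c2) * (2 * y + (c1 + c2) * w) = (x + 2 * c1 * y + c1\<^sup>2 * w) - (x + 2 * c2 * y + c2\<^sup>2 * w)"
    by (simp add: power2_eq_square algebra_simps)
  then have sum_y: "2 * y + (c1 + c2) * w = 0" using assms(1,5,6) by simp
  have "(c1 - c2) * (k * (c1 + c2) - m) = (k * c1\<^sup>2 - m * c1 - 1) - (k * c2\<^sup>2 - m * c2 - 1)"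
    by (simp add: power2_eq_square algebra_simps)
  then have sum_roots: "k * (c1 + c2) = m" using assms(1,3,4) by simp
  have "x - c1 * c2 * w = (x + 2 * c1 * y + c1\<^sup>2 * w) - c1 * (2 * y + (c1 + c2) * w)"
    by (simp add: power2_eq_square algebra_simps)
  then have x: "x = c1 * c2 * w" using assms(5) sum_y by simp
  have "k * c1 * c2 + 1 = c1 * (k * (c1 + c2) - m) - (k * c1\<^sup>2 - m * c1 - 1)"
    by (simp add: power2_eq_square algebra_simps)
  then have prod_roots: "k * c1 * c2 = -1" using assms(3) sum_roots by simp
  have "2 * y = - ((c1 + c2) * w)" using sum_y by linarith
  then have "k * (2 * y) = - (k * (c1 + c2)) * w" by simp
  also have "\<dots> = m * (k * c1 * c2) * w" using sum_roots prod_roots by simp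
  also have "\<dots> = k * (m * x)" using x by (simp add: algebra_simps)
  finally show ?thesis using assms(2) by simp
qed

section \<open>Pair states with projections of equal norms\<close>

definition equal_proj_norms ::
  "'v set \<Rightarrow> ('v \<Rightarrow> 'v \<Rightarrow> bool) \<Rightarrow> ('v + 'v set \<Rightarrow> real) \<Rightarrow> ('v + 'v set \<Rightarrow> real) \<Rightarrow> bool"
where
  "equal_proj_norms V E z z' \<longleftrightarrow> (\<forall>l. lap_eigenvalue (Q_vertices V E) (Q_adj E) l \<longrightarrow>
      vinner (Q_vertices V E) (eig_proj (Q_vertices V E) (Q_adj E) l z) (eig_proj (Q_vertices V E) (Q_adj E) l z)
    = vinner (Q_vertices V E) (eig_proj (Q_vertices V E) (Q_adj E) l z') (eig_proj (Q_vertices V E) (Q_adj E) l z'))"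

lemma strongly_cospectral_equal_proj_norms:
  assumes "lap_strongly_cospectral (Q_vertices V E) (Q_adj E) a b c d"
  shows "equal_proj_norms V E (pair_state a b) (pair_state c d)"
  using assms unfolding equal_proj_norms_def lap_strongly_cospectral_def
  by (auto simp: vinner_def)

lemma equal_proj_norms_sym: "equal_proj_norms V E z z' \<longleftrightarrow> equal_proj_norms V E z' z"
  unfolding equal_proj_norms_def by auto

lemma pair_state_swap: "pair_state b a = (\<lambda>u. (-1) * pair_state a b u)"
  unfolding pair_state_def by auto

lemma equal_proj_norms_pair_state_swap:
  assumes "finite (Q_vertices V E)"
  shows "equal_proj_norms V E z (pair_state d c) \<longleftrightarrow> equal_proj_norms V E z (pair_state c d)"
  unfolding equal_proj_norms_def pair_state_swap[of d c] eig_proj_scale[OF assms]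
    vinner_scale_left vinner_scale_right by simp

lemma char_vec_self [simp]: "char_vec a a = 1"
  unfolding char_vec_def by simp

lemma vertex_part_pair_state:
  "vertex_part (pair_state (Inl x) (Inl y)) = pair_state x y"
  "vertex_part (pair_state (Inr e) (Inr f)) = (\<lambda>_. 0)"
  "vertex_part (pair_state (Inl v) (Inr e)) = char_vec v"
  unfolding vertex_part_def pair_state_def char_vec_def by auto

lemma edge_part_pair_state:
  "edge_part (pair_state (Inl x) (Inl y)) = (\<lambda>_. 0)"
  "edge_part (pair_state (Inr e) (Inr f)) = pair_state e f"
  "edge_part (pair_state (Inl v) (Inr e)) = (\<lambda>f. - char_vec e f)"
  unfolding edge_part_def pair_state_def char_vec_def by auto

lemma reduced_proj_pair_state_Inl:
  "reduced_proj V E r \<theta> l (pair_state (Inl x) (Inl y)) = eig_proj V E \<theta> (pair_state x y)"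
  unfolding reduced_proj_def vertex_part_pair_state edge_part_pair_state by simp

lemma reduced_proj_pair_state_Inr:
  assumes "finite V"
  shows "reduced_proj V E r \<theta> l (pair_state (Inr e) (Inr f))
    = (\<lambda>u. lift_coeff r l * eig_proj V E \<theta> (incidence V E (pair_state e f)) u)"
  unfolding reduced_proj_def vertex_part_pair_state edge_part_pair_state
  using eig_proj_scale[OF assms] by simp

context regular_simple_graph
begin

lemma equal_proj_norms_reduced_proj:
  assumes "lap_eigenvalue V E \<theta>" "equal_proj_norms V E z z'" "lifted_eigenvalue r \<theta> l"
  shows "vinner V (reduced_proj V E r \<theta> l z) (reduced_proj V E r \<theta> l z)
    = vinner V (reduced_proj V E r \<theta> l z') (reduced_proj V E r \<theta> l z')"
proof -
  have le: "\<theta> \<le> 2 * real r" by (rule lap_eigenvalue_le[OF assms(1)])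
  have "vinner (Q_vertices V E) (eig_proj (Q_vertices V E) (Q_adj E) l z)
      (eig_proj (Q_vertices V E) (Q_adj E) l z)
    = vinner (Q_vertices V E) (eig_proj (Q_vertices V E) (Q_adj E) l z')
      (eig_proj (Q_vertices V E) (Q_adj E) l z')"
    using assms(2) lap_eigenvalue_Q_lifted[OF assms(3,1)] unfolding equal_proj_norms_def by blast
  then show ?thesis
    using lift_norm_factor_pos[OF le, of "lift_coeff r l"]
    unfolding vinner_self_eig_proj_Q[OF assms(3) le] by simp
qed

text \<open>By vinner_self_reduced_proj, equality of the norms at a lifted eigenvalue l is a quadratic
  equation in c = lift_coeff r l. For \<theta> \<noteq> 2 r it holds at l = theta_plus and l = theta_minus,
  whose coefficients are the two roots of (2 r - \<theta>) c^2 - (r - 2 - \<theta>) c - 1, which eliminates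
  the quadratic term; for \<theta> = 2 r the edge contribution vanishes and l = r suffices.\<close>

lemma equal_proj_norms_eigenvalue_identity:
  fixes z z' :: "'v + 'v set \<Rightarrow> real"
  assumes ev: "lap_eigenvalue V E \<theta>" and eq: "equal_proj_norms V E z z'"
  shows "2 * (vinner V (eig_proj V E \<theta> (vertex_part z)) (eig_proj V E \<theta> (incidence V E (edge_part z)))
            - vinner V (eig_proj V E \<theta> (vertex_part z')) (eig_proj V E \<theta> (incidence V E (edge_part z'))))
       = (real r - 2 - \<theta>) * (vinner V (eig_proj V E \<theta> (vertex_part z)) (eig_proj V E \<theta> (vertex_part z))
            - vinner V (eig_proj V E \<theta> (vertex_part z')) (eig_proj V E \<theta> (vertex_part z')))"
proof -
  let ?P = "eig_proj V E \<theta>"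
  define a where "a y = vinner V (?P (vertex_part y)) (?P (vertex_part y))" for y
  define g where "g y = vinner V (?P (vertex_part y)) (?P (incidence V E (edge_part y)))" for y
  define b where "b y = vinner V (?P (incidence V E (edge_part y))) (?P (incidence V E (edge_part y)))" for y
  have quadratic: "(a z - a z') + 2 * lift_coeff r l * (g z - g z') + (lift_coeff r l)\<^sup>2 * (b z - b z') = 0"
    if "lifted_eigenvalue r \<theta> l" for l
    using equal_proj_norms_reduced_proj[OF ev eq that]
    unfolding vinner_self_reduced_proj a_def g_def b_def by (simp add: algebra_simps)
  show ?thesis
  proof (cases "\<theta> = 2 * real r")
    case True
    have "g y = 0" "b y = 0" for y
      unfolding g_def b_def True eig_proj_2r_incidence by simp_all
    moreover have "lifted_eigenvalue r \<theta> (real r)"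
      unfolding lifted_eigenvalue_def True by (simp add: power2_eq_square algebra_simps)
    ultimately have "a z - a z' = 0" using quadratic by simp
    then show ?thesis using \<open>g z = 0\<close> \<open>g z' = 0\<close> unfolding a_def g_def by simp
  next
    case False
    note lifted = theta_plus_minus_lifted[OF False]
    have "2 * (g z - g z') = (real r - 2 - \<theta>) * (a z - a z')"
    proof (rule quadratic_vanishing_at_two_roots[where k = "2 * real r - \<theta>"])
      show "lift_coeff r (theta_plus r \<theta>) \<noteq> lift_coeff r (theta_minus r \<theta>)"
        using lifted theta_plus_ne_theta_minus
        by (intro lift_coeff_inj) (auto simp: lifted_eigenvalue_def)
    qed (use False lift_coeff_quadratic[OF lifted(1)] lift_coeff_quadratic[OF lifted(2)]
          quadratic[OF lifted(1)] quadratic[OF lifted(2)] in auto)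
    then show ?thesis unfolding a_def g_def .
  qed
qed

text \<open>Sum equal_proj_norms_eigenvalue_identity, weighted by \<theta>^k, over the spectrum of G.\<close>

lemma equal_proj_norms_moment_identity:
  fixes z z' :: "'v + 'v set \<Rightarrow> real" and k :: nat
  assumes eq: "equal_proj_norms V E z z'"
  defines "p \<equiv> vertex_part z" and "q \<equiv> incidence V E (edge_part z)"
    and "p' \<equiv> vertex_part z'" and "q' \<equiv> incidence V E (edge_part z')"
    and "M \<equiv> \<lambda>x y. vinner V ((laplacian V E ^^ k) x) y"
  shows "2 * (M p q - M p' q') = (real r - 2) * (M p p - M p' p') - (M p (laplacian V E p) - M p' (laplacian V E p'))"
proof -
  let ?T = "{\<theta>. lap_eigenvalue V E \<theta>}" and ?P = "eig_proj V E"
  have spec: "M x y = (\<Sum>\<theta>\<in>?T. \<theta> ^ k * vinner V (?P \<theta> x) (?P \<theta> y))" for x y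
    unfolding M_def by (rule vinner_laplacian_power_eq_sum_eig_proj[OF simple])
  have "2 * (M p q - M p' q')
      = (\<Sum>\<theta>\<in>?T. \<theta> ^ k * (2 * (vinner V (?P \<theta> p) (?P \<theta> q) - vinner V (?P \<theta> p') (?P \<theta> q'))))"
    unfolding spec by (simp add: sum_subtractf sum_distrib_left algebra_simps)
  also have "\<dots> = (\<Sum>\<theta>\<in>?T. \<theta> ^ k * ((real r - 2 - \<theta>)
      * (vinner V (?P \<theta> p) (?P \<theta> p) - vinner V (?P \<theta> p') (?P \<theta> p'))))"
    using equal_proj_norms_eigenvalue_identity[OF _ eq] unfolding p_def q_def p'_def q'_def
    by (intro sum.cong) auto
  also have "\<dots> = (\<Sum>\<theta>\<in>?T. (real r - 2) * (\<theta> ^ k * vinner V (?P \<theta> p) (?P \<theta> p))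
      - (real r - 2) * (\<theta> ^ k * vinner V (?P \<theta> p') (?P \<theta> p'))
      - (\<theta> ^ k * (\<theta> * vinner V (?P \<theta> p) (?P \<theta> p))
        - \<theta> ^ k * (\<theta> * vinner V (?P \<theta> p') (?P \<theta> p'))))"
    by (intro sum.cong) (auto simp: algebra_simps)
  also have "\<dots> = (real r - 2) * (M p p - M p' p') - (M p (laplacian V E p) - M p' (laplacian V E p'))"
    unfolding spec eig_proj_laplacian[OF simple] vinner_scale_right
    by (simp add: sum_subtractf sum_distrib_left right_diff_distrib)
  finally show ?thesis .
qed

lemma not_adj_self: "\<not> E c c"
  using adj_in_V by blast

lemma laplacian_char_vec:
  assumes "v \<in> V" "c \<in> V"
  shows "laplacian V E (char_vec c) v = (if v = c then real r else 0) - (if E c v then 1 else 0)"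
proof -
  have "(\<Sum>w\<in>{w \<in> V. E v w}. char_vec c w) = (\<Sum>w\<in>{w \<in> V. E v w}. if w = c then 1 else 0)"
    unfolding char_vec_def by (intro sum.cong) auto
  also have "\<dots> = (if E c v then 1 else 0)"
    using finite_V assms(2) adj_sym by (auto simp: sum.delta')
  finally show ?thesis
    using laplacian_eq[OF assms(1)] not_adj_self by (auto simp: char_vec_def)
qed

lemma vinner_char_vec_laplacian: "c \<in> V \<Longrightarrow> vinner V (char_vec c) (laplacian V E (char_vec c)) = real r"
  using vinner_char_vec_left[OF finite_V] laplacian_char_vec[of c c] not_adj_self[of c] by simp

lemma vinner_self_laplacian_char_vec:
  assumes c: "c \<in> V"
  shows "vinner V (laplacian V E (char_vec c)) (laplacian V E (char_vec c)) = (real r)\<^sup>2 + real r"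
proof -
  have "vinner V (laplacian V E (char_vec c)) (laplacian V E (char_vec c))
      = (\<Sum>v\<in>V. (if v = c then (real r)\<^sup>2 else 0) + (if E c v then 1 else 0))"
    unfolding vinner_def using c not_adj_self[of c]
    by (intro sum.cong refl) (auto simp: laplacian_char_vec power2_eq_square)
  also have "\<dots> = (real r)\<^sup>2 + real (card {w \<in> V. E c w})"
    using finite_V c by (simp add: sum.distrib sum.If_cases Int_def conj_commute)
  finally show ?thesis using card_neighbours[OF c] by simp
qed

lemma vinner_pair_state_left:
  assumes "x \<in> V" "y \<in> V"
  shows "vinner V (pair_state x y) g = g x - g y"
  using vinner_diff_left[of V "char_vec x" "char_vec y" g] vinner_char_vec_left[OF finite_V] assms
  unfolding pair_state_def by simp

lemma vinner_self_pair_state: "x \<in> V \<Longrightarrow> y \<in> V \<Longrightarrow> x \<noteq> y \<Longrightarrow> vinner V (pair_state x y) (pair_state x y) = 2"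
  unfolding vinner_pair_state_left by (simp add: pair_state_def char_vec_def)

lemma vinner_pair_state_laplacian_ge:
  assumes x: "x \<in> V" and y: "y \<in> V" and "x \<noteq> y"
  shows "2 * real r \<le> vinner V (pair_state x y) (laplacian V E (pair_state x y))"
proof -
  have "laplacian V E (pair_state x y)
      = (\<lambda>u. 1 * laplacian V E (char_vec x) u + (-1) * laplacian V E (char_vec y) u)"
    unfolding pair_state_def using laplacian_add_scaled[of V E 1 "char_vec x" "-1" "char_vec y"] by simp
  then have "vinner V (pair_state x y) (laplacian V E (pair_state x y))
      = 2 * real r + (if E y x then 1 else 0) + (if E x y then 1 else 0)"
    unfolding vinner_pair_state_left[OF x y]
    using laplacian_char_vec x y \<open>x \<noteq> y\<close> adj_in_V by auto
  then show ?thesis by simp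
qed

lemma incidence_char_vec:
  assumes "v \<in> V" "e \<in> edge_set E"
  shows "incidence V E (char_vec e) v = (if v \<in> e then 1 else 0)"
  using assms finite_edge_set by (simp add: incidence_def char_vec_def sum.delta')

lemma vinner_laplacian_char_vec_incidence:
  assumes "v \<in> e" "e \<in> edge_set E"
  shows "vinner V (laplacian V E (char_vec v)) (incidence V E (char_vec e)) = real r - 1"
proof -
  obtain w where w: "e = {v, w}" "E v w" "w \<noteq> v" "v \<in> V" "w \<in> V"
    using edge_set_cases_at[OF assms(2,1)] .
  have "vinner V (laplacian V E (char_vec v)) (incidence V E (char_vec e))
      = (\<Sum>u\<in>V. if u \<in> e then laplacian V E (char_vec v) u else 0)"
    unfolding vinner_def using incidence_char_vec[OF _ assms(2)] by (intro sum.cong) auto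
  also have "\<dots> = (\<Sum>u\<in>e. laplacian V E (char_vec v) u)"
    using edge_subset_V[OF assms(2)] by (simp add: sum.inter_restrict[OF finite_V, symmetric] Int_absorb1)
  also have "\<dots> = laplacian V E (char_vec v) v + laplacian V E (char_vec v) w"
    using w by simp
  also have "\<dots> = real r - 1"
    using w laplacian_char_vec[OF w(4) w(4)] laplacian_char_vec[OF w(5) w(4)] not_adj_self by simp
  finally show ?thesis .
qed

lemma not_equal_proj_norms_Inl_Inl_Inr_Inr:
  assumes "x \<in> V" "y \<in> V" "x \<noteq> y"
  shows "\<not> equal_proj_norms V E (pair_state (Inl x) (Inl y)) (pair_state (Inr e) (Inr f))"
proof
  assume "equal_proj_norms V E (pair_state (Inl x) (Inl y)) (pair_state (Inr e) (Inr f))"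
  from equal_proj_norms_moment_identity[OF this, where k = 0]
  have "vinner V (pair_state x y) (laplacian V E (pair_state x y)) = 2 * real r - 4"
    by (simp add: vertex_part_pair_state edge_part_pair_state vinner_self_pair_state[OF assms])
  then show False using vinner_pair_state_laplacian_ge[OF assms] by simp
qed

lemma not_equal_proj_norms_Inl_Inl_mixed:
  assumes "x \<in> V" "y \<in> V" "x \<noteq> y" "v \<in> V" "e \<in> edge_set E"
  shows "\<not> equal_proj_norms V E (pair_state (Inl x) (Inl y)) (pair_state (Inl v) (Inr e))"
proof
  assume "equal_proj_norms V E (pair_state (Inl x) (Inl y)) (pair_state (Inl v) (Inr e))"
  from equal_proj_norms_moment_identity[OF this, where k = 0]
  have "2 * (if v \<in> e then 1 else 0)
      = real r - 2 - (vinner V (pair_state x y) (laplacian V E (pair_state x y)) - real r)"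
    by (simp add: vertex_part_pair_state edge_part_pair_state
        vinner_scale_right vinner_char_vec_left[OF finite_V assms(4)] incidence_char_vec assms
        vinner_self_pair_state laplacian_char_vec not_adj_self)
  then show False using vinner_pair_state_laplacian_ge[OF assms(1-3)] by (simp split: if_splits)
qed

lemma not_equal_proj_norms_Inr_Inr_mixed:
  assumes "v \<in> V" "g \<in> edge_set E"
  shows "\<not> equal_proj_norms V E (pair_state (Inr e) (Inr f)) (pair_state (Inl v) (Inr g))"
proof
  assume eq: "equal_proj_norms V E (pair_state (Inr e) (Inr f)) (pair_state (Inl v) (Inr g))"
  from equal_proj_norms_moment_identity[OF eq, where k = 0]
  have "v \<in> g"
    by (simp add: vertex_part_pair_state edge_part_pair_state
        vinner_scale_right vinner_char_vec_left[OF finite_V assms(1)] incidence_char_vec assms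
        laplacian_char_vec not_adj_self split: if_splits)
  moreover have "vinner V (laplacian V E (char_vec v)) (char_vec v) = real r"
    using vinner_char_vec_laplacian[OF assms(1)] by (simp add: vinner_commute)
  ultimately have "2 * (real r - 1) = 3 * real r"
    using equal_proj_norms_moment_identity[OF eq, where k = 1]
    by (simp add: vertex_part_pair_state edge_part_pair_state
        vinner_minus_right vinner_laplacian_char_vec_incidence[OF \<open>v \<in> g\<close> assms(2)]
        vinner_self_laplacian_char_vec[OF assms(1)] power2_eq_square algebra_simps)
  then show False by simp
qed

lemma equal_proj_norms_Inl_Inl_same_kind:
  assumes "x \<in> V" "y \<in> V" "x \<noteq> y" "c \<in> Q_vertices V E" "d \<in> Q_vertices V E"
    and eq: "equal_proj_norms V E (pair_state (Inl x) (Inl y)) (pair_state c d)"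
  shows "c \<in> Inl ` V \<and> d \<in> Inl ` V"
proof (cases c; cases d)
  fix e f assume "c = Inr e" "d = Inr f"
  then show ?thesis using eq not_equal_proj_norms_Inl_Inl_Inr_Inr[OF assms(1-3)] by simp
next
  fix v e assume "c = Inl v" "d = Inr e"
  then show ?thesis using eq not_equal_proj_norms_Inl_Inl_mixed[OF assms(1-3)] assms(4,5) by simp
next
  fix e v assume "c = Inr e" "d = Inl v"
  then show ?thesis
    using eq not_equal_proj_norms_Inl_Inl_mixed[OF assms(1-3)] assms(4,5)
      equal_proj_norms_pair_state_swap[OF finite_Q_vertices] by simp
qed (use assms(4,5) in auto)

lemma equal_proj_norms_Inr_Inr_same_kind:
  assumes "c \<in> Q_vertices V E" "d \<in> Q_vertices V E" "c \<noteq> d"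
    and eq: "equal_proj_norms V E (pair_state (Inr e) (Inr f)) (pair_state c d)"
  shows "c \<in> Inr ` edge_set E \<and> d \<in> Inr ` edge_set E"
proof (cases c; cases d)
  fix x y assume "c = Inl x" "d = Inl y"
  moreover have "equal_proj_norms V E (pair_state c d) (pair_state (Inr e) (Inr f))"
    using eq equal_proj_norms_sym by blast
  ultimately show ?thesis using not_equal_proj_norms_Inl_Inl_Inr_Inr assms(1-3) by auto
next
  fix v g assume "c = Inl v" "d = Inr g"
  then show ?thesis using eq not_equal_proj_norms_Inr_Inr_mixed assms(1,2) by simp
next
  fix g v assume "c = Inr g" "d = Inl v"
  then show ?thesis
    using eq not_equal_proj_norms_Inr_Inr_mixed assms(1,2)
      equal_proj_norms_pair_state_swap[OF finite_Q_vertices] by simp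
qed (use assms(1,2) in auto)

lemma pair_state_reduced_proj_factorization:
  assumes "a \<in> Q_vertices V E" "b \<in> Q_vertices V E" "a \<noteq> b"
    and same: "(a \<in> Inl ` V \<and> b \<in> Inl ` V) \<or> (a \<in> Inr ` edge_set E \<and> b \<in> Inr ` edge_set E)"
  obtains k U where
    "\<And>l. lifted_eigenvalue r \<theta> l \<Longrightarrow>
      k l \<noteq> 0 \<and> reduced_proj V E r \<theta> l (pair_state a b) = (\<lambda>u. k l * U u)"
    "\<And>c d. c \<in> Q_vertices V E \<Longrightarrow> d \<in> Q_vertices V E \<Longrightarrow> c \<noteq> d \<Longrightarrow>
      lap_strongly_cospectral (Q_vertices V E) (Q_adj E) a b c d \<Longrightarrow>
      \<exists>U'. \<forall>l. lifted_eigenvalue r \<theta> l \<longrightarrow> reduced_proj V E r \<theta> l (pair_state c d) = (\<lambda>u. k l * U' u)"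
proof (cases "a \<in> Inl ` V \<and> b \<in> Inl ` V")
  case True
  then obtain x y where xy: "a = Inl x" "b = Inl y" "x \<in> V" "y \<in> V" "x \<noteq> y" using assms(3) by auto
  show ?thesis
  proof (rule that[of "\<lambda>_. 1" "eig_proj V E \<theta> (pair_state x y)"])
    fix c d assume cd: "c \<in> Q_vertices V E" "d \<in> Q_vertices V E"
      and "lap_strongly_cospectral (Q_vertices V E) (Q_adj E) a b c d"
    then have "equal_proj_norms V E (pair_state (Inl x) (Inl y)) (pair_state c d)"
      using strongly_cospectral_equal_proj_norms xy(1,2) by blast
    then have "c \<in> Inl ` V \<and> d \<in> Inl ` V"
      by (rule equal_proj_norms_Inl_Inl_same_kind[OF xy(3-5) cd])
    then obtain v w where "c = Inl v" "d = Inl w" by blast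
    then show "\<exists>U'. \<forall>l. lifted_eigenvalue r \<theta> l \<longrightarrow> reduced_proj V E r \<theta> l (pair_state c d) = (\<lambda>u. 1 * U' u)"
      by (simp add: reduced_proj_pair_state_Inl)
  qed (simp add: xy reduced_proj_pair_state_Inl)
next
  case False
  then obtain e f where ef: "a = Inr e" "b = Inr f" using same by auto
  show ?thesis
  proof (rule that[of "lift_coeff r" "eig_proj V E \<theta> (incidence V E (pair_state e f))"])
    fix c d assume cd: "c \<in> Q_vertices V E" "d \<in> Q_vertices V E" "c \<noteq> d"
      and "lap_strongly_cospectral (Q_vertices V E) (Q_adj E) a b c d"
    then have "equal_proj_norms V E (pair_state (Inr e) (Inr f)) (pair_state c d)"
      using strongly_cospectral_equal_proj_norms ef by blast
    then have "c \<in> Inr ` edge_set E \<and> d \<in> Inr ` edge_set E"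
      by (rule equal_proj_norms_Inr_Inr_same_kind[OF cd])
    then obtain g h where "c = Inr g" "d = Inr h" by blast
    then show "\<exists>U'. \<forall>l. lifted_eigenvalue r \<theta> l \<longrightarrow>
        reduced_proj V E r \<theta> l (pair_state c d) = (\<lambda>u. lift_coeff r l * U' u)"
      by (auto simp: reduced_proj_pair_state_Inr[OF finite_V])
  qed (simp_all add: ef reduced_proj_pair_state_Inr[OF finite_V] lift_coeff_identities(1))
qed

lemma eig_proj_Q_scaled_iff_factor:
  assumes "lifted_eigenvalue r \<theta> l" "\<theta> \<le> 2 * real r" "k \<noteq> 0"
    and "reduced_proj V E r \<theta> l z = (\<lambda>u. k * U u)" "reduced_proj V E r \<theta> l w = (\<lambda>u. k * U' u)"
  shows "eig_proj (Q_vertices V E) (Q_adj E) l z = (\<lambda>u. s * eig_proj (Q_vertices V E) (Q_adj E) l w u)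
    \<longleftrightarrow> U = (\<lambda>u. s * U' u)"
  unfolding eig_proj_Q_eq_scaled_iff[OF assms(1,2)] assms(4,5) using assms(3)
  by (simp add: fun_eq_iff mult.left_commute)

lemma theta_plus_minus_symmetric:
  fixes a b :: "'v + 'v set" and k :: "real \<Rightarrow> real" and U :: "'v \<Rightarrow> real"
  defines "QV \<equiv> Q_vertices V E" and "QE \<equiv> Q_adj E"
  assumes ev: "lap_eigenvalue V E \<theta>" and ne: "\<theta> \<noteq> 2 * real r"
    and factor: "\<And>l. lifted_eigenvalue r \<theta> l \<Longrightarrow>
      k l \<noteq> 0 \<and> reduced_proj V E r \<theta> l (pair_state a b) = (\<lambda>u. k l * U u)"
    and partner: "\<And>c d. c \<in> QV \<Longrightarrow> d \<in> QV \<Longrightarrow> c \<noteq> d \<Longrightarrow> lap_strongly_cospectral QV QE a b c d \<Longrightarrow>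
      \<exists>U'. \<forall>l. lifted_eigenvalue r \<theta> l \<longrightarrow> reduced_proj V E r \<theta> l (pair_state c d) = (\<lambda>u. k l * U' u)"
  shows "(theta_plus r \<theta> \<in> lap_supp QV QE (pair_state a b) \<longleftrightarrow>
          theta_minus r \<theta> \<in> lap_supp QV QE (pair_state a b))
    \<and> (\<forall>c d. c \<in> QV \<longrightarrow> d \<in> QV \<longrightarrow> c \<noteq> d \<longrightarrow> lap_strongly_cospectral QV QE a b c d \<longrightarrow>
          (theta_plus r \<theta> \<in> Lambda_plus QV QE a b c d \<longleftrightarrow> theta_minus r \<theta> \<in> Lambda_plus QV QE a b c d)
        \<and> (theta_plus r \<theta> \<in> Lambda_minus QV QE a b c d \<longleftrightarrow> theta_minus r \<theta> \<in> Lambda_minus QV QE a b c d))"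
proof -
  let ?F = "eig_proj QV QE"
  have le: "\<theta> \<le> 2 * real r" by (rule lap_eigenvalue_le[OF ev])
  note lifted = theta_plus_minus_lifted[OF ne]
  have rel: "?F l (pair_state a b) = (\<lambda>u. s * ?F l w u) \<longleftrightarrow> U = (\<lambda>u. s * U' u)"
    if l: "lifted_eigenvalue r \<theta> l" and w: "reduced_proj V E r \<theta> l w = (\<lambda>u. k l * U' u)" for l s w U'
    using eig_proj_Q_scaled_iff_factor[OF l le _ _ w, where z = "pair_state a b" and U = U and s = s]
      factor[OF l] unfolding QV_def QE_def by blast
  have supp: "l \<in> lap_supp QV QE (pair_state a b) \<longleftrightarrow> U \<noteq> (\<lambda>_. 0)" if l: "lifted_eigenvalue r \<theta> l" for l
  proof -
    have "?F l (pair_state a b) = (\<lambda>u. 0 * ?F l (pair_state a b) u) \<longleftrightarrow> U = (\<lambda>u. 0 * U u)"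
      using rel[OF l] factor[OF l] by blast
    then show ?thesis
      using lap_eigenvalue_Q_lifted[OF l ev] unfolding lap_supp_def QV_def QE_def by simp
  qed
  show ?thesis
  proof (intro conjI allI impI)
    show "theta_plus r \<theta> \<in> lap_supp QV QE (pair_state a b) \<longleftrightarrow>
        theta_minus r \<theta> \<in> lap_supp QV QE (pair_state a b)"
      using supp lifted by simp
  next
    fix c d assume "c \<in> QV" "d \<in> QV" "c \<noteq> d" "lap_strongly_cospectral QV QE a b c d"
    then obtain U' where U': "\<And>l. lifted_eigenvalue r \<theta> l \<Longrightarrow>
        reduced_proj V E r \<theta> l (pair_state c d) = (\<lambda>u. k l * U' u)"
      using partner by blast
    have "?F l (pair_state a b) = ?F l (pair_state c d) \<longleftrightarrow> U = U'"
      and "?F l (pair_state a b) = (\<lambda>u. - ?F l (pair_state c d) u) \<longleftrightarrow> U = (\<lambda>u. - U' u)"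
      if "lifted_eigenvalue r \<theta> l" for l
      using rel[OF that U'[OF that], of 1] rel[OF that U'[OF that], of "-1"] by simp_all
    then show "theta_plus r \<theta> \<in> Lambda_plus QV QE a b c d \<longleftrightarrow> theta_minus r \<theta> \<in> Lambda_plus QV QE a b c d"
      and "theta_plus r \<theta> \<in> Lambda_minus QV QE a b c d \<longleftrightarrow> theta_minus r \<theta> \<in> Lambda_minus QV QE a b c d"
      unfolding Lambda_plus_def Lambda_minus_def using supp lifted by simp_all
  qed
qed

end

theorem theorem3p1:
  fixes V :: "'v set" and E :: "'v \<Rightarrow> 'v \<Rightarrow> bool" and r :: nat and \<theta> :: real
    and a b :: "'v + 'v set"
  defines "QV \<equiv> Q_vertices V E" and "QE \<equiv> Q_adj E"
  assumes reg: "regular_graph V E r" and r2: "r \<ge> 2"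
    and eig: "lap_eigenvalue V E \<theta>" and ne: "\<theta> \<noteq> 2 * real r"
    and ab: "a \<in> QV" "b \<in> QV" "a \<noteq> b"
    and same: "(a \<in> Inl ` V \<and> b \<in> Inl ` V) \<or> (a \<in> Inr ` edge_set E \<and> b \<in> Inr ` edge_set E)"
  shows "(theta_plus r \<theta> \<in> lap_supp QV QE (pair_state a b) \<longleftrightarrow>
          theta_minus r \<theta> \<in> lap_supp QV QE (pair_state a b))
    \<and> (\<forall>c d. c \<in> QV \<longrightarrow> d \<in> QV \<longrightarrow> c \<noteq> d \<longrightarrow> lap_strongly_cospectral QV QE a b c d \<longrightarrow>
          (theta_plus r \<theta> \<in> Lambda_plus QV QE a b c d \<longleftrightarrow> theta_minus r \<theta> \<in> Lambda_plus QV QE a b c d)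
        \<and> (theta_plus r \<theta> \<in> Lambda_minus QV QE a b c d \<longleftrightarrow> theta_minus r \<theta> \<in> Lambda_minus QV QE a b c d))"
proof -
  interpret regular_simple_graph V E r by (rule regular_simple_graph.intro[OF reg])
  obtain k U where
    factor: "\<And>l. lifted_eigenvalue r \<theta> l \<Longrightarrow>
      k l \<noteq> 0 \<and> reduced_proj V E r \<theta> l (pair_state a b) = (\<lambda>u. k l * U u)" and
    partner: "\<And>c d. c \<in> Q_vertices V E \<Longrightarrow> d \<in> Q_vertices V E \<Longrightarrow> c \<noteq> d \<Longrightarrow>
      lap_strongly_cospectral (Q_vertices V E) (Q_adj E) a b c d \<Longrightarrow>
      \<exists>U'. \<forall>l. lifted_eigenvalue r \<theta> l \<longrightarrow> reduced_proj V E r \<theta> l (pair_state c d) = (\<lambda>u. k l * U' u)"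
    by (rule pair_state_reduced_proj_factorization[OF ab[unfolded QV_def] same, where \<theta> = \<theta>]) blast
  show ?thesis
    unfolding QV_def QE_def by (rule theta_plus_minus_symmetric[OF eig ne factor partner])
qed

end
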